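(* Let $X,Y \in \mathcal{B(H)}$, $q \in \mathcal{D'}$ and $0 \le \gamma \le 1$. Then \begin{align*} \frac{|q|}{2}\sup_{\theta \in \mathbb{R}}\left\lbrace \|e^{i\theta}X+e^{-i\theta}Y^*\|\right\rbrace \le w_q\left(\begin{bmatrix} 0 & X\\ Y & 0 \end{bmatrix}\right)\le & \frac{|q|}{2}\| |X|^{2\gamma}+|Y^*|^{2(1-\gamma)}\|^\frac{1}{2}\| |X^*|^{2(1-\gamma)}+|Y|^{2\gamma}\|^\frac{1}{2}\\ &+\sqrt{1-|q|^2}\max\{ \|X\|, \|Y\|\}. \end{align*}
   Context: $\mathcal{H}$ is a complex Hilbert space, $\mathcal{B(H)}$ the bounded operators on it with operator norm; $2\times2$ operator matrices act on $\mathcal{H}\oplus\mathcal{H}$. $|T|=(T^*T)^{1/2}$. $\mathcal{D}$ is the closed unit disc in $\mathbb{C}$, $\mathcal{D'}=\mathcal{D}\setminus\{0\}$. $w_q(T)=\sup\{|\langle Tx,y\rangle| : \|x\|=\|y\|=1,\ \langle x,y\rangle=q\}$. *)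

theory Defs
  imports "HOL-Analysis.Analysis"
begin

text \<open>The library has no complex inner product spaces, so we introduce the class of
complex Hilbert spaces: a Banach space with a complex scalar multiplication compatible with
the real one, and a complex inner product (linear in the first argument, conjugate-linear in
the second) that induces the norm.\<close>

class chilbert = banach +
  fixes scaleC :: "complex \<Rightarrow> 'a \<Rightarrow> 'a"
    and cinner :: "'a \<Rightarrow> 'a \<Rightarrow> complex"
  assumes scaleC_add_right: "scaleC a (x + y) = scaleC a x + scaleC a y"
    and scaleC_add_left: "scaleC (a + b) x = scaleC a x + scaleC b x"
    and scaleC_scaleC: "scaleC a (scaleC b x) = scaleC (a * b) x"
    and scaleC_one: "scaleC 1 x = x"
    and scaleR_scaleC: "scaleR r x = scaleC (complex_of_real r) x"
    and cinner_add_left: "cinner (x + y) z = cinner x z + cinner y z"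
    and cinner_scaleC_left: "cinner (scaleC a x) y = a * cinner x y"
    and cinner_commute: "cinner y x = cnj (cinner x y)"
    and cinner_self: "cinner x x = complex_of_real ((norm x)\<^sup>2)"

text \<open>The complex numbers form a complex Hilbert space (so the class is inhabited).\<close>

instantiation complex :: chilbert
begin
definition scaleC_complex_def: "scaleC a (x::complex) = a * x"
definition cinner_complex_def: "cinner (x::complex) y = x * cnj y"
instance
proof
  fix a b x y z :: complex and r :: real
  show "scaleC a (x + y) = scaleC a x + scaleC a y" by (simp add: scaleC_complex_def algebra_simps)
  show "scaleC (a + b) x = scaleC a x + scaleC b x" by (simp add: scaleC_complex_def algebra_simps)
  show "scaleC a (scaleC b x) = scaleC (a * b) x" by (simp add: scaleC_complex_def algebra_simps)
  show "scaleC 1 x = x" by (simp add: scaleC_complex_def)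
  show "scaleR r x = scaleC (complex_of_real r) x" by (simp add: scaleC_complex_def scaleR_conv_of_real)
  show "cinner (x + y) z = cinner x z + cinner y z" by (simp add: cinner_complex_def algebra_simps)
  show "cinner (scaleC a x) y = a * cinner x y" by (simp add: cinner_complex_def scaleC_complex_def algebra_simps)
  show "cinner y x = cnj (cinner x y)" by (simp add: cinner_complex_def mult.commute)
  show "cinner x x = complex_of_real ((norm x)\<^sup>2)" unfolding cinner_complex_def using complex_norm_square[of x] by simp
qed
end

text \<open>The direct sum \<open>H \<oplus> H'\<close> (as the product type, whose norm is
\<open>sqrt (\<parallel>x\<parallel>^2 + \<parallel>y\<parallel>^2)\<close>) is again a complex Hilbert space.\<close>

instantiation prod :: (chilbert, chilbert) chilbert
begin
definition scaleC_prod_def: "scaleC a x = (scaleC a (fst x), scaleC a (snd x))"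
definition cinner_prod_def: "cinner x y = cinner (fst x) (fst y) + cinner (snd x) (snd y)"
instance
proof
  fix a b :: complex and x y z :: "'a \<times> 'b" and r :: real
  show "scaleC a (x + y) = scaleC a x + scaleC a y"
    by (simp add: scaleC_prod_def scaleC_add_right)
  show "scaleC (a + b) x = scaleC a x + scaleC b x"
    by (simp add: scaleC_prod_def scaleC_add_left)
  show "scaleC a (scaleC b x) = scaleC (a * b) x"
    by (simp add: scaleC_prod_def scaleC_scaleC)
  show "scaleC 1 x = x" by (simp add: scaleC_prod_def scaleC_one)
  show "scaleR r x = scaleC (complex_of_real r) x"
    by (simp add: scaleC_prod_def scaleR_scaleC scaleR_prod_def)
  show "cinner (x + y) z = cinner x z + cinner y z"
    by (simp add: cinner_prod_def cinner_add_left)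
  show "cinner (scaleC a x) y = a * cinner x y"
    by (simp add: cinner_prod_def scaleC_prod_def cinner_scaleC_left algebra_simps)
  show "cinner y x = cnj (cinner x y)"
    by (simp add: cinner_prod_def cinner_commute[of "fst x"] cinner_commute[of "snd x"])
  show "cinner x x = complex_of_real ((norm x)\<^sup>2)"
    by (simp add: cinner_prod_def cinner_self norm_prod_def)
qed
end

definition bounded_op :: "('a::chilbert \<Rightarrow> 'b::chilbert) \<Rightarrow> bool" where
  "bounded_op T \<longleftrightarrow> (\<forall>x y. T (x + y) = T x + T y) \<and> (\<forall>a x. T (scaleC a x) = scaleC a (T x))
     \<and> (\<exists>K. \<forall>x. norm (T x) \<le> K * norm x)"

text \<open>Operator norm: the library's \<open>onorm\<close>.  Adjoint \<open>T\<^sup>*\<close>: the unique map with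
\<open>\<langle>T x, y\<rangle> = \<langle>x, T\<^sup>* y\<rangle>\<close> (exists for bounded \<open>T\<close> by Riesz).\<close>

definition adj :: "('a::chilbert \<Rightarrow> 'b::chilbert) \<Rightarrow> ('b \<Rightarrow> 'a)" where
  "adj T = (\<lambda>y. THE z. \<forall>x. cinner (T x) y = cinner x z)"

definition positive_op :: "('a::chilbert \<Rightarrow> 'a) \<Rightarrow> bool" where
  "positive_op P \<longleftrightarrow> bounded_op P \<and> (\<forall>x. cinner (P x) x \<in> \<real> \<and> 0 \<le> Re (cinner (P x) x))"

text \<open>Real powers \<open>P^t\<close> (\<open>t \<ge> 0\<close>) of a positive operator \<open>P\<close> (continuous functional
calculus), written via the norm-convergent binomial series:
\<open>P^t = \<parallel>P\<parallel>^t (I - A)^t = \<parallel>P\<parallel>^t \<Sum>\<^sub>k (t choose k) (-A)^k\<close> with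
\<open>A = I - P/\<parallel>P\<parallel>\<close>, \<open>0 \<le> A \<le> I\<close>.\<close>

definition op_pow :: "('a::chilbert \<Rightarrow> 'a) \<Rightarrow> real \<Rightarrow> ('a \<Rightarrow> 'a)" where
  "op_pow P t =
    (if t = 0 then id
     else if P = (\<lambda>x. 0) then (\<lambda>x. 0)
     else (let A = (\<lambda>x. x - (1 / onorm P) *\<^sub>R P x)
           in (\<lambda>x. (onorm P powr t) *\<^sub>R (\<Sum>k. ((t gchoose k) * (-1) ^ k) *\<^sub>R (A ^^ k) x))))"

definition op_abs :: "('a::chilbert \<Rightarrow> 'a) \<Rightarrow> ('a \<Rightarrow> 'a)" where
  "op_abs T = op_pow (adj T \<circ> T) (1/2)"

definition op_matrix :: "('a::chilbert \<Rightarrow> 'a) \<Rightarrow> ('a \<Rightarrow> 'a) \<Rightarrow> ('a \<Rightarrow> 'a) \<Rightarrow> ('a \<Rightarrow> 'a)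
    \<Rightarrow> ('a \<times> 'a \<Rightarrow> 'a \<times> 'a)" where
  "op_matrix A B C D = (\<lambda>(x1, x2). (A x1 + B x2, C x1 + D x2))"

definition q_numrad :: "complex \<Rightarrow> ('a::chilbert \<Rightarrow> 'a) \<Rightarrow> real" where
  "q_numrad q T = Sup {cmod (cinner (T x) y) | x y. norm x = 1 \<and> norm y = 1 \<and> cinner x y = q}"

end

(*
  For unit vectors a, b the vectors u = (a, b)/sqrt 2 and z = (a, -b)/sqrt 2 are
  orthonormal in H x H, and both unit vectors conj(q) u +- sqrt(1 - |q|^2) z have inner product q
  with u; averaging gives |q| |<T u, u>| <= w_q(T).  Since 2 <T u, u> = <X b, a> + <Y a, b>, the real
  part of <(e X + conj(e) adj Y) b, a> is at most 2 |<T u, u>| for |e| = 1, and choosing a in the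
  direction of (e X + conj(e) adj Y) b yields the operator norm.

  A unit vector v with <u, v> = q is conj(q) u + w with w orthogonal to u and
  |w| = sqrt(1 - |q|^2), so |<T u, v>| <= |q| |<T u, u>| + sqrt(1 - |q|^2) |T|.  For u = (x1, x2),
  <T u, u> = <X x2, x1> + <Y x1, x2> is bounded by the mixed Schwarz inequality
  |<X x, y>|^2 <= <|X|^(2g) x, x> <|adj X|^(2(1-g)) y, y> applied to both terms, Cauchy-Schwarz in
  the plane and |x1| |x2| <= 1/2.

  The powers P^t are the binomial series of op_pow; the Vandermonde identity turns the Cauchy
  product of two such series into P^s P^t = P^(s+t), from which positivity of P^t, |X|^2 = adj X X and
  the intertwining X |X|^t = |adj X|^t X follow.
*)
theory Submission
  imports Defs "HOL-Computational_Algebra.Formal_Power_Series"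
begin

lemma scaleC_zero_right [simp]: "scaleC a (0::'a::chilbert) = 0"
  using scaleC_add_right[of a 0 0] by simp

lemma scaleC_minus_right: "scaleC a (- x::'a::chilbert) = - scaleC a x"
  using scaleC_add_right[of a x "-x"] by (simp add: minus_unique)

lemma scaleC_diff_right: "scaleC a (x - y::'a::chilbert) = scaleC a x - scaleC a y"
  using scaleC_add_right[of a x "-y"] by (simp add: scaleC_minus_right)

lemma scaleC_scaleR_commute: "scaleC a (r *\<^sub>R (x::'a::chilbert)) = r *\<^sub>R scaleC a x"
  by (simp add: scaleR_scaleC scaleC_scaleC mult.commute)

lemma cinner_add_right: "cinner (x::'a::chilbert) (y + z) = cinner x y + cinner x z"
  by (metis cinner_add_left cinner_commute complex_cnj_add)

lemma cinner_scaleC_right: "cinner (x::'a::chilbert) (scaleC a y) = cnj a * cinner x y"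
  by (metis cinner_commute cinner_scaleC_left complex_cnj_cnj complex_cnj_mult)

lemma cinner_zero_left [simp]: "cinner (0::'a::chilbert) y = 0"
  using cinner_add_left[of 0 0 y] by simp

lemma cinner_zero_right [simp]: "cinner (x::'a::chilbert) 0 = 0"
  using cinner_add_right[of x 0 0] by simp

lemma cinner_minus_left: "cinner (- x::'a::chilbert) y = - cinner x y"
  using cinner_add_left[of x "-x" y] by (simp add: minus_unique)

lemma cinner_minus_right: "cinner (x::'a::chilbert) (- y) = - cinner x y"
  using cinner_add_right[of x y "-y"] by (simp add: minus_unique)

lemma cinner_diff_left: "cinner (x - y::'a::chilbert) z = cinner x z - cinner y z"
  using cinner_add_left[of x "-y" z] by (simp add: cinner_minus_left)

lemma cinner_diff_right: "cinner (x::'a::chilbert) (y - z) = cinner x y - cinner x z"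
  using cinner_add_right[of x y "-z"] by (simp add: cinner_minus_right)

lemma cinner_scaleR_left: "cinner (r *\<^sub>R x::'a::chilbert) y = of_real r * cinner x y"
  by (simp add: scaleR_scaleC cinner_scaleC_left)

lemma cinner_scaleR_right: "cinner (x::'a::chilbert) (r *\<^sub>R y) = of_real r * cinner x y"
  by (simp add: scaleR_scaleC cinner_scaleC_right)

lemma cinner_self_Re: "Re (cinner x x) = (norm (x::'a::chilbert))\<^sup>2"
  by (simp add: cinner_self)

lemma cinner_self_eq_0: "cinner (x::'a::chilbert) x = 0 \<longleftrightarrow> x = 0"
  by (simp add: cinner_self)

lemma cinner_ext_left: "(\<And>z. cinner (x::'a::chilbert) z = cinner y z) \<Longrightarrow> x = y"
  by (metis cinner_diff_left cinner_self_eq_0 diff_self eq_iff_diff_eq_0)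

lemma cinner_ext_right: "(\<And>z. cinner z (x::'a::chilbert) = cinner z y) \<Longrightarrow> x = y"
  by (metis cinner_commute cinner_ext_left complex_cnj_cnj)

lemma norm_square_eq_1_iff: "(norm x)\<^sup>2 = 1 \<longleftrightarrow> norm x = 1"
  by (smt (verit) norm_ge_zero power2_eq_1_iff)

lemma norm_scaleC: "norm (scaleC a (x::'a::chilbert)) = cmod a * norm x"
proof -
  have "complex_of_real ((norm (scaleC a x))\<^sup>2) = complex_of_real ((cmod a * norm x)\<^sup>2)"
    unfolding cinner_self[symmetric] cinner_scaleC_left cinner_scaleC_right
    by (simp add: cinner_self power_mult_distrib mult.assoc[symmetric]
        complex_norm_square[symmetric] mult.commute)
  then have "(norm (scaleC a x))\<^sup>2 = (cmod a * norm x)\<^sup>2" by (simp only: of_real_eq_iff)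
  then show ?thesis by (simp add: power2_eq_iff_nonneg)
qed

lemma norm_add_square:
  "(norm (x + y::'a::chilbert))\<^sup>2 = (norm x)\<^sup>2 + (norm y)\<^sup>2 + 2 * Re (cinner x y)"
proof -
  have "Re (cinner y x) = Re (cinner x y)" by (subst cinner_commute) simp
  then show ?thesis by (simp add: cinner_self_Re[symmetric] cinner_add_left cinner_add_right)
qed

lemma norm_diff_square:
  "(norm (x - y::'a::chilbert))\<^sup>2 = (norm x)\<^sup>2 + (norm y)\<^sup>2 - 2 * Re (cinner x y)"
  using norm_add_square[of x "-y"] by (simp add: cinner_minus_right)

lemma discriminant_le_of_quadratic_nonneg:
  fixes a b c :: real
  assumes quadratic: "\<And>l. 0 \<le> a - 2 * l * b + l\<^sup>2 * c" and "0 \<le> c"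
  shows "b\<^sup>2 \<le> a * c"
proof (cases "c = 0")
  case True
  show ?thesis
  proof (cases "b = 0")
    case False
    have "0 \<le> a - 2 * ((a + 1) / (2 * b)) * b" using quadratic[of "(a + 1) / (2 * b)"] True by simp
    with False show ?thesis by (simp add: field_simps)
  qed (use quadratic[of 0] True in simp)
next
  case False
  with \<open>0 \<le> c\<close> have "0 < c" by simp
  have "0 \<le> (a - 2 * (b / c) * b + (b / c)\<^sup>2 * c) * c"
    by (rule mult_nonneg_nonneg[OF quadratic]) (use \<open>0 < c\<close> in simp)
  also have "\<dots> = a * c - b\<^sup>2" using \<open>0 < c\<close> by (simp add: field_simps power2_eq_square)
  finally show ?thesis by simp
qed

lemma hermitian_form_Cauchy_Schwarz:
  fixes F :: "'a::chilbert \<Rightarrow> 'a \<Rightarrow> complex"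
  assumes add: "\<And>x y z. F (x + y) z = F x z + F y z"
    and scale: "\<And>a x y. F (scaleC a x) y = a * F x y"
    and hermitian: "\<And>x y. F y x = cnj (F x y)"
    and nonneg: "\<And>x. 0 \<le> Re (F x x)"
  shows "(cmod (F x y))\<^sup>2 \<le> Re (F x x) * Re (F y y)"
proof (cases "F x y = 0")
  case True
  then show ?thesis using nonneg[of x] nonneg[of y] by simp
next
  case False
  have add_right: "F x (y + z) = F x y + F x z" for x y z
    by (metis add hermitian complex_cnj_add)
  have scale_right: "F x (scaleC a y) = cnj a * F x y" for a x y
    by (metis scale hermitian complex_cnj_mult complex_cnj_cnj)
  \<comment> \<open>rotate \<open>y\<close> so that \<open>F x w\<close> is real, then use that \<open>F (x - l w) (x - l w) \<ge> 0\<close> for real \<open>l\<close>\<close>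
  define u where "u = F x y / of_real (cmod (F x y))"
  define w where "w = scaleC u y"
  have "cmod u = 1" using False by (simp add: u_def norm_divide)
  then have "cnj u * u = 1" by (metis complex_norm_square mult.commute of_real_1 power_one)
  then have Fww: "F w w = F y y" by (simp add: w_def scale scale_right mult.assoc[symmetric])
  have "cnj (F x y) * F x y = of_real ((cmod (F x y))\<^sup>2)"
    by (metis complex_norm_square mult.commute)
  then have Fxw: "F x w = of_real (cmod (F x y))"
    using False by (simp add: w_def scale_right u_def power2_eq_square)
  have Fwx: "F w x = of_real (cmod (F x y))" by (metis hermitian Fxw complex_cnj_complex_of_real)
  have "0 \<le> Re (F x x) - 2 * l * cmod (F x y) + l\<^sup>2 * Re (F y y)" for l :: real
  proof -
    have "F (x + scaleC (- of_real l) w) (x + scaleC (- of_real l) w)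
        = F x x - of_real l * F x w - of_real l * F w x + of_real l * (of_real l * F w w)"
      by (simp add: add add_right scale scale_right algebra_simps)
    then show ?thesis
      using nonneg[of "x + scaleC (- of_real l) w"] by (simp add: Fxw Fwx Fww power2_eq_square)
  qed
  then show ?thesis by (rule discriminant_le_of_quadratic_nonneg) (rule nonneg)
qed

lemma cinner_Cauchy_Schwarz: "cmod (cinner x y) \<le> norm (x::'a::chilbert) * norm y"
proof -
  have "(cmod (cinner x y))\<^sup>2 \<le> Re (cinner x x) * Re (cinner y y)"
    by (rule hermitian_form_Cauchy_Schwarz)
      (auto simp: cinner_add_left cinner_scaleC_left cinner_self_Re intro: cinner_commute)
  also have "\<dots> = (norm x * norm y)\<^sup>2" by (simp add: cinner_self_Re power_mult_distrib)
  finally show ?thesis by (rule power2_le_imp_le) simp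
qed

section \<open>Orthogonal projection and the Riesz representation\<close>

lemma parallelogram_law:
  "(norm (a + b::'a::chilbert))\<^sup>2 + (norm (a - b))\<^sup>2 = 2 * (norm a)\<^sup>2 + 2 * (norm b)\<^sup>2"
  using norm_add_square[of a b] norm_diff_square[of a b] by simp

lemma minimizing_sequence_Cauchy:
  fixes C :: "'a::chilbert set"
  assumes "convex C" and c: "\<And>n. c n \<in> C"
    and lower: "\<And>d. d \<in> C \<Longrightarrow> \<delta> \<le> norm (x - d)" and "0 \<le> \<delta>"
    and approx: "\<And>n. (norm (x - c n))\<^sup>2 \<le> \<delta>\<^sup>2 + 1 / real (Suc n)"
  shows "Cauchy c"
proof (rule metric_CauchyI)
  \<comment> \<open>the parallelogram law applied to \<open>x - c n\<close> and \<open>x - c m\<close>, whose midpoint lies in \<open>C\<close>\<close>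
  have dist_bound: "(norm (c n - c m))\<^sup>2 \<le> 2 / real (Suc n) + 2 / real (Suc m)" for n m
  proof -
    have "(1/2) *\<^sub>R (c n + c m) \<in> C"
      using convexD[OF \<open>convex C\<close> c[of n] c[of m], of "1/2" "1/2"] by (simp add: scaleR_add_right)
    then have "\<delta>\<^sup>2 \<le> (norm (x - (1/2) *\<^sub>R (c n + c m)))\<^sup>2"
      using lower \<open>0 \<le> \<delta>\<close> by (simp add: power_mono)
    moreover have "x - c n + (x - c m) = 2 *\<^sub>R (x - (1/2) *\<^sub>R (c n + c m))"
      by (simp add: algebra_simps scaleR_2)
    moreover have "norm (x - c n - (x - c m)) = norm (c n - c m)"
      by (simp add: norm_minus_commute)
    ultimately show ?thesis
      using parallelogram_law[of "x - c n" "x - c m"] approx[of n] approx[of m]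
      by (simp add: power_mult_distrib)
  qed
  fix e :: real assume "0 < e"
  obtain N :: nat where N: "4 / e\<^sup>2 < real N" using reals_Archimedean2 by blast
  have "dist (c m) (c n) < e" if "N \<le> m" "N \<le> n" for m n
  proof -
    have "2 / real (Suc m) \<le> 2 / real (Suc N)" "2 / real (Suc n) \<le> 2 / real (Suc N)"
      using that by (auto intro!: divide_left_mono)
    moreover have "4 / real (Suc N) < e\<^sup>2"
    proof -
      have "4 < real N * e\<^sup>2" using N \<open>0 < e\<close> by (simp add: field_simps)
      also have "\<dots> < real (Suc N) * e\<^sup>2" using \<open>0 < e\<close> by (simp add: distrib_right)
      finally show ?thesis by (simp add: field_simps)
    qed
    ultimately have "(norm (c m - c n))\<^sup>2 < e\<^sup>2" using dist_bound[of m n] by linarith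
    then show ?thesis using \<open>0 < e\<close> by (simp add: dist_norm power_less_imp_less_base)
  qed
  then show "\<exists>M. \<forall>m\<ge>M. \<forall>n\<ge>M. dist (c m) (c n) < e" by blast
qed

lemma exists_nearest_point:
  fixes C :: "'a::chilbert set"
  assumes "closed C" "convex C" "C \<noteq> {}"
  shows "\<exists>c\<in>C. \<forall>d\<in>C. norm (x - c) \<le> norm (x - d)"
proof -
  define D where "D = (\<lambda>d. norm (x - d)) ` C"
  define \<delta> where "\<delta> = Inf D"
  have "D \<noteq> {}" using assms(3) by (simp add: D_def)
  have lower: "\<delta> \<le> norm (x - d)" if "d \<in> C" for d
    unfolding \<delta>_def by (rule cInf_lower) (use that in \<open>auto simp: D_def intro: bdd_belowI[of _ 0]\<close>)
  have "0 \<le> \<delta>" unfolding \<delta>_def by (rule cInf_greatest[OF \<open>D \<noteq> {}\<close>]) (auto simp: D_def)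
  have "\<exists>c\<in>C. (norm (x - c))\<^sup>2 \<le> \<delta>\<^sup>2 + 1 / real (Suc n)" for n
  proof -
    have "\<delta> < sqrt (\<delta>\<^sup>2 + 1 / real (Suc n))"
      by (rule real_less_rsqrt) simp
    then obtain c where "c \<in> C" "norm (x - c) < sqrt (\<delta>\<^sup>2 + 1 / real (Suc n))"
      using cInf_lessD[OF \<open>D \<noteq> {}\<close>] unfolding \<delta>_def D_def by blast
    then have "(norm (x - c))\<^sup>2 \<le> (sqrt (\<delta>\<^sup>2 + 1 / real (Suc n)))\<^sup>2"
      by (intro power_mono) simp_all
    with \<open>c \<in> C\<close> show ?thesis by auto
  qed
  then obtain c where c: "\<And>n. c n \<in> C"
    and approx: "\<And>n. (norm (x - c n))\<^sup>2 \<le> \<delta>\<^sup>2 + 1 / real (Suc n)"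
    by metis
  have "Cauchy c" by (rule minimizing_sequence_Cauchy[OF assms(2) c lower \<open>0 \<le> \<delta>\<close> approx])
  then obtain l where l: "c \<longlonglongrightarrow> l" using Cauchy_convergent_iff convergent_def by blast
  have "(norm (x - l))\<^sup>2 \<le> \<delta>\<^sup>2 + 0"
  proof (rule LIMSEQ_le)
    show "(\<lambda>n. (norm (x - c n))\<^sup>2) \<longlonglongrightarrow> (norm (x - l))\<^sup>2" by (intro tendsto_intros l)
    show "(\<lambda>n. \<delta>\<^sup>2 + 1 / real (Suc n)) \<longlonglongrightarrow> \<delta>\<^sup>2 + 0"
      by (intro tendsto_add tendsto_const LIMSEQ_Suc[OF lim_const_over_n])
    show "\<exists>N. \<forall>n\<ge>N. (norm (x - c n))\<^sup>2 \<le> \<delta>\<^sup>2 + 1 / real (Suc n)"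
      using approx by blast
  qed
  then have "norm (x - l) \<le> \<delta>" using \<open>0 \<le> \<delta>\<close> by (auto intro: power2_le_imp_le)
  moreover have "l \<in> C" using closed_sequentially[OF assms(1) c l] .
  ultimately show ?thesis using lower by (meson order_trans)
qed

definition csubspace :: "'a::chilbert set \<Rightarrow> bool" where
  "csubspace M \<longleftrightarrow> 0 \<in> M \<and> (\<forall>x\<in>M. \<forall>y\<in>M. x + y \<in> M) \<and> (\<forall>a. \<forall>x\<in>M. scaleC a x \<in> M)"

lemma csubspace_convex: "csubspace M \<Longrightarrow> convex M"
  unfolding csubspace_def convex_def by (simp add: scaleR_scaleC)

lemma closure_csubspace_add:
  assumes "csubspace M" "y \<in> closure M" "m \<in> M"
  shows "y + m \<in> closure M"
proof -
  obtain f where f: "\<And>n. f n \<in> M" "f \<longlonglongrightarrow> y" using assms(2) unfolding closure_sequential by blast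
  have "(\<lambda>n. f n + m) \<longlonglongrightarrow> y + m" by (intro tendsto_intros f)
  moreover have "f n + m \<in> M" for n using f assms(1,3) unfolding csubspace_def by blast
  ultimately show ?thesis unfolding closure_sequential by (intro exI[of _ "\<lambda>n. f n + m"]) auto
qed

lemma orthogonal_decomposition:
  assumes M: "csubspace M"
  shows "\<exists>x0\<in>closure M. \<forall>m\<in>M. cinner (x - x0) m = 0"
proof -
  have "closure M \<noteq> {}" using M closure_subset unfolding csubspace_def by blast
  then obtain x0 where x0: "x0 \<in> closure M" and nearest: "\<And>d. d \<in> closure M \<Longrightarrow> norm (x - x0) \<le> norm (x - d)"
    using exists_nearest_point[OF closed_closure convex_closure[OF csubspace_convex[OF M]]] by blast
  have Re_zero: "Re (cinner (x - x0) v) = 0" if "v \<in> M" for v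
  proof -
    have "0 \<le> - 2 * l * Re (cinner (x - x0) v) + l\<^sup>2 * (norm v)\<^sup>2" for l :: real
    proof -
      have "l *\<^sub>R v \<in> M" using M \<open>v \<in> M\<close> unfolding csubspace_def by (metis scaleR_scaleC)
      then have "norm (x - x0) \<le> norm ((x - x0) - l *\<^sub>R v)"
        using nearest closure_csubspace_add[OF M x0] by (metis diff_diff_eq)
      then have "(norm (x - x0))\<^sup>2 \<le> (norm ((x - x0) - l *\<^sub>R v))\<^sup>2" by (simp add: power_mono)
      then show ?thesis by (simp add: norm_diff_square cinner_scaleR_right power_mult_distrib)
    qed
    then have "(Re (cinner (x - x0) v))\<^sup>2 \<le> 0 * (norm v)\<^sup>2"
      by (intro discriminant_le_of_quadratic_nonneg) simp_all
    then show ?thesis by simp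
  qed
  have "cinner (x - x0) m = 0" if "m \<in> M" for m
  proof -
    have "scaleC \<i> m \<in> M" using M \<open>m \<in> M\<close> unfolding csubspace_def by blast
    with Re_zero[OF this] Re_zero[OF \<open>m \<in> M\<close>] show ?thesis
      by (simp add: cinner_scaleC_right complex_eq_iff)
  qed
  with x0 show ?thesis by blast
qed

lemma Riesz_representation:
  fixes f :: "'a::chilbert \<Rightarrow> complex"
  assumes add: "\<And>x y. f (x + y) = f x + f y" and scale: "\<And>a x. f (scaleC a x) = a * f x"
    and bounded: "\<And>x. cmod (f x) \<le> K * norm x"
  shows "\<exists>z. \<forall>x. f x = cinner x z"
proof (cases "\<forall>x. f x = 0")
  case True then show ?thesis by (intro exI[of _ 0]) simp
next
  case False
  then obtain x where fx: "f x \<noteq> 0" by blast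
  have lin: "bounded_linear f"
    by (rule bounded_linear_intro[where K=K])
      (auto simp: add scale[of "of_real _", folded scaleR_scaleC] scaleR_conv_of_real bounded mult.commute)
  have f_diff: "f (u - v) = f u - f v" for u v using linear_diff[OF bounded_linear.linear[OF lin]] .
  define N where "N = {x. f x = 0}"
  have N: "csubspace N" unfolding csubspace_def N_def using add scale f_diff[of 0 0] by auto
  have "closed N" unfolding N_def
    using lin by (intro closed_Collect_eq continuous_intros) (simp_all add: linear_continuous_on)
  then obtain x0 where "x0 \<in> N" and orth: "\<And>m. m \<in> N \<Longrightarrow> cinner (x - x0) m = 0"
    using orthogonal_decomposition[OF N, of x] by auto
  \<comment> \<open>\<open>u\<close> spans the orthogonal complement of the kernel \<open>N\<close>\<close>
  define u where "u = x - x0"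
  have fu: "f u = f x" using \<open>x0 \<in> N\<close> by (simp add: u_def f_diff N_def)
  then have "u \<noteq> 0" using fx f_diff[of 0 0] by auto
  have "f v = cinner v (scaleC (cnj (f u) / of_real ((norm u)\<^sup>2)) u)" for v
  proof -
    have "v - scaleC (f v / f u) u \<in> N"
      unfolding N_def using fu fx by (simp add: f_diff scale)
    then have "cinner u (v - scaleC (f v / f u) u) = 0" using orth by (metis cinner_commute complex_cnj_zero u_def)
    then have "cinner v u = (f v / f u) * cinner u u"
      by (metis cinner_commute cinner_diff_right cinner_scaleC_right complex_cnj_cnj complex_cnj_mult
          eq_iff_diff_eq_0)
    then show ?thesis
      using fu fx \<open>u \<noteq> 0\<close> by (simp add: cinner_scaleC_right cinner_self field_simps)
  qed
  then show ?thesis by blast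
qed

lemma bounded_op_map_add: "bounded_op T \<Longrightarrow> T (x + y) = T x + T y"
  unfolding bounded_op_def by blast

lemma bounded_op_map_scaleC: "bounded_op T \<Longrightarrow> T (scaleC a x) = scaleC a (T x)"
  unfolding bounded_op_def by blast

lemma bounded_op_map_scaleR: "bounded_op T \<Longrightarrow> T (r *\<^sub>R x) = r *\<^sub>R T x"
  by (simp add: scaleR_scaleC bounded_op_map_scaleC)

lemma bounded_op_bounded_linear:
  assumes "bounded_op (T::'a::chilbert \<Rightarrow> 'b::chilbert)"
  shows "bounded_linear T"
proof -
  obtain K where "\<And>x. norm (T x) \<le> K * norm x" using assms unfolding bounded_op_def by blast
  then show ?thesis
    by (intro bounded_linear_intro[where K=K])
      (simp_all add: assms bounded_op_map_add bounded_op_map_scaleR mult.commute)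
qed

lemma bounded_op_map_zero: "bounded_op T \<Longrightarrow> T 0 = 0"
  using bounded_op_map_add[of T 0 0] by simp

lemma bounded_op_map_diff: "bounded_op T \<Longrightarrow> T (x - y) = T x - T y"
  by (rule linear_diff[OF bounded_linear.linear[OF bounded_op_bounded_linear]])

lemma norm_bounded_op_le: "bounded_op T \<Longrightarrow> norm (T x) \<le> onorm T * norm x"
  by (rule onorm[OF bounded_op_bounded_linear])

lemma onorm_bounded_op_nonneg: "bounded_op T \<Longrightarrow> 0 \<le> onorm T"
  by (rule onorm_pos_le[OF bounded_op_bounded_linear])

text \<open>Unlike the library's \<open>onorm_le\<close>, this does not need a nontrivial space.\<close>

lemma onorm_le_nonneg:
  fixes f :: "'a::real_normed_vector \<Rightarrow> 'b::real_normed_vector"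
  assumes "0 \<le> b" "\<And>x. norm (f x) \<le> b * norm x"
  shows "onorm f \<le> b"
  unfolding onorm_def
proof (rule cSUP_least)
  show "norm (f x) / norm x \<le> b" for x
    using assms(1) assms(2)[of x] by (cases "x = 0") (auto simp: divide_le_eq mult.commute)
qed simp

lemma onorm_le_on_unit_sphere:
  assumes T: "bounded_op T" and "0 \<le> b" and unit: "\<And>x. norm x = 1 \<Longrightarrow> norm (T x) \<le> b"
  shows "onorm T \<le> b"
proof (rule onorm_le_nonneg[OF \<open>0 \<le> b\<close>])
  fix x
  show "norm (T x) \<le> b * norm x"
  proof (cases "x = 0")
    case True then show ?thesis by (simp add: bounded_op_map_zero[OF T])
  next
    case False
    then have "norm (T ((1 / norm x) *\<^sub>R x)) \<le> b" by (intro unit) simp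
    with False show ?thesis by (simp add: bounded_op_map_scaleR[OF T] field_simps)
  qed
qed

lemma bounded_opI:
  assumes "\<And>x y. T (x + y) = T x + T y" "\<And>a x. T (scaleC a x) = scaleC a (T x)"
    "\<And>x. norm (T x) \<le> K * norm x"
  shows "bounded_op T"
  unfolding bounded_op_def using assms by blast

lemma bounded_op_id: "bounded_op (id::'a::chilbert \<Rightarrow> 'a)"
  by (rule bounded_opI[where K=1]) simp_all

lemma bounded_op_comp:
  assumes S: "bounded_op S" and T: "bounded_op T"
  shows "bounded_op (S \<circ> T)"
proof (rule bounded_opI[where K="onorm S * onorm T"])
  fix x
  have "norm (S (T x)) \<le> onorm S * norm (T x)" by (rule norm_bounded_op_le[OF S])
  also have "\<dots> \<le> onorm S * (onorm T * norm x)"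
    by (intro mult_left_mono norm_bounded_op_le[OF T] onorm_bounded_op_nonneg[OF S])
  finally show "norm ((S \<circ> T) x) \<le> onorm S * onorm T * norm x" by (simp add: mult.assoc)
qed (simp_all add: bounded_op_map_add[OF S] bounded_op_map_add[OF T]
       bounded_op_map_scaleC[OF S] bounded_op_map_scaleC[OF T])

lemma bounded_op_plus:
  assumes F: "bounded_op F" and G: "bounded_op G"
  shows "bounded_op (\<lambda>x. F x + G x)"
proof (rule bounded_opI[where K="onorm F + onorm G"])
  fix x
  have "norm (F x + G x) \<le> onorm F * norm x + onorm G * norm x"
    by (intro order_trans[OF norm_triangle_ineq] add_mono norm_bounded_op_le F G)
  then show "norm (F x + G x) \<le> (onorm F + onorm G) * norm x" by (simp add: algebra_simps)
qed (simp_all add: bounded_op_map_add[OF F] bounded_op_map_add[OF G] bounded_op_map_scaleC[OF F]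
       bounded_op_map_scaleC[OF G] scaleC_add_right)

lemma bounded_op_scaleC:
  assumes F: "bounded_op F"
  shows "bounded_op (\<lambda>x. scaleC c (F x))"
proof (rule bounded_opI[where K="cmod c * onorm F"])
  show "norm (scaleC c (F x)) \<le> cmod c * onorm F * norm x" for x
    using norm_bounded_op_le[OF F, of x] by (simp add: norm_scaleC mult.assoc mult_left_mono)
qed (simp_all add: bounded_op_map_add[OF F] bounded_op_map_scaleC[OF F] scaleC_add_right
       scaleC_scaleC mult.commute)

lemma onorm_comp_le: "bounded_op S \<Longrightarrow> bounded_op T \<Longrightarrow> onorm (S \<circ> T) \<le> onorm S * onorm T"
  by (rule onorm_compose[OF bounded_op_bounded_linear bounded_op_bounded_linear])

lemma Re_cinner_le_onorm: "bounded_op A \<Longrightarrow> Re (cinner (A x) x) \<le> onorm A * (norm x)\<^sup>2"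
  using complex_Re_le_cmod[of "cinner (A x) x"] cinner_Cauchy_Schwarz[of "A x" x]
    mult_right_mono[OF norm_bounded_op_le[of A x] norm_ge_zero[of x]]
  by (simp add: power2_eq_square mult.assoc)

lemma adj_cinner:
  assumes T: "bounded_op T"
  shows "cinner (T x) y = cinner x (adj T y)"
proof -
  have "\<exists>z. \<forall>x. cinner (T x) y = cinner x z"
  proof (rule Riesz_representation)
    show "cmod (cinner (T x) y) \<le> (onorm T * norm y) * norm x" for x
      using cinner_Cauchy_Schwarz[of "T x" y] mult_right_mono[OF norm_bounded_op_le[OF T, of x] norm_ge_zero[of y]]
      by (simp add: algebra_simps)
  qed (simp_all add: bounded_op_map_add[OF T] bounded_op_map_scaleC[OF T] cinner_add_left cinner_scaleC_left)
  then have "\<exists>!z. \<forall>x. cinner (T x) y = cinner x z"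
    by (auto intro: cinner_ext_right)
  then have "\<forall>x. cinner (T x) y = cinner x (adj T y)"
    unfolding adj_def by (rule theI')
  then show ?thesis by blast
qed

lemma adj_cinner_left: "bounded_op T \<Longrightarrow> cinner (adj T y) x = cinner y (T x)"
  by (metis adj_cinner cinner_commute)

lemma bounded_op_adj:
  assumes T: "bounded_op T"
  shows "bounded_op (adj T)"
proof (rule bounded_opI[where K="onorm T"])
  fix y
  have "(norm (adj T y))\<^sup>2 \<le> cmod (cinner (T (adj T y)) y)"
    by (simp add: adj_cinner[OF T] cinner_self norm_power)
  also have "\<dots> \<le> onorm T * norm (adj T y) * norm y"
    using cinner_Cauchy_Schwarz mult_right_mono[OF norm_bounded_op_le[OF T] norm_ge_zero]
    by (rule order_trans)
  finally show "norm (adj T y) \<le> onorm T * norm y"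
    using onorm_bounded_op_nonneg[OF T]
    by (cases "adj T y = 0") (simp_all add: power2_eq_square algebra_simps)
qed (rule cinner_ext_right; simp add: adj_cinner[OF T, symmetric] cinner_add_right cinner_scaleC_right)+

lemma adj_adj: "bounded_op T \<Longrightarrow> adj (adj T) = T"
  by (rule ext, rule cinner_ext_right) (metis adj_cinner adj_cinner_left bounded_op_adj)

lemma onorm_square_le_onorm_adjoint_comp:
  fixes T T' :: "'a::chilbert \<Rightarrow> 'a"
  assumes T: "bounded_op T" and T': "bounded_op T'" and adj: "\<And>x y. cinner (T x) y = cinner x (T' y)"
  shows "(onorm T)\<^sup>2 \<le> onorm (T' \<circ> T)"
proof -
  have TT: "bounded_op (T' \<circ> T)" by (rule bounded_op_comp[OF T' T])
  have "norm (T x) \<le> sqrt (onorm (T' \<circ> T)) * norm x" for x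
  proof -
    have "(norm (T x))\<^sup>2 \<le> cmod (cinner x (T' (T x)))"
      by (simp add: adj[symmetric] cinner_self norm_power)
    also have "\<dots> \<le> norm x * (onorm (T' \<circ> T) * norm x)"
      using cinner_Cauchy_Schwarz[of x "T' (T x)"] norm_bounded_op_le[OF TT, of x]
      by (simp add: order_trans[OF _ mult_left_mono])
    also have "\<dots> = (sqrt (onorm (T' \<circ> T)) * norm x)\<^sup>2"
      using onorm_bounded_op_nonneg[OF TT] by (simp add: power2_eq_square)
    finally show ?thesis
      by (rule power2_le_imp_le) (simp add: onorm_bounded_op_nonneg[OF TT])
  qed
  then have "onorm T \<le> sqrt (onorm (T' \<circ> T))"
    by (intro onorm_le_nonneg) (simp_all add: onorm_bounded_op_nonneg[OF TT])
  then show ?thesis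
    using onorm_bounded_op_nonneg[OF T] onorm_bounded_op_nonneg[OF TT]
    by (metis power_mono real_sqrt_pow2)
qed

lemma onorm_adjoint_pair:
  fixes T T' :: "'a::chilbert \<Rightarrow> 'a"
  assumes T: "bounded_op T" and T': "bounded_op T'" and adj: "\<And>x y. cinner (T x) y = cinner x (T' y)"
  shows "onorm T' = onorm T" and "onorm (T' \<circ> T) = (onorm T)\<^sup>2"
proof -
  have le: "onorm S \<le> onorm S'"
    if S: "bounded_op S" and S': "bounded_op S'" and a: "\<And>x y. cinner (S x) y = cinner x (S' y)"
    for S S' :: "'a \<Rightarrow> 'a"
  proof -
    have "(onorm S)\<^sup>2 \<le> onorm S' * onorm S"
      using onorm_square_le_onorm_adjoint_comp[OF S S' a] onorm_comp_le[OF S' S] by linarith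
    then show ?thesis using onorm_bounded_op_nonneg[OF S] onorm_bounded_op_nonneg[OF S']
      by (cases "onorm S = 0") (auto simp: power2_eq_square)
  qed
  have adj': "\<And>x y. cinner (T' x) y = cinner x (T y)" by (metis adj cinner_commute)
  show eq: "onorm T' = onorm T"
    using le[OF T T' adj] le[OF T' T adj'] by simp
  show "onorm (T' \<circ> T) = (onorm T)\<^sup>2"
    using onorm_square_le_onorm_adjoint_comp[OF T T' adj] onorm_comp_le[OF T' T] eq
    by (simp add: power2_eq_square)
qed

lemma onorm_adj: "bounded_op (T::'a::chilbert \<Rightarrow> 'a) \<Longrightarrow> onorm (adj T) = onorm T"
  by (rule onorm_adjoint_pair(1)[OF _ bounded_op_adj adj_cinner])

lemma onorm_adj_comp: "bounded_op (T::'a::chilbert \<Rightarrow> 'a) \<Longrightarrow> onorm (adj T \<circ> T) = (onorm T)\<^sup>2"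
  by (rule onorm_adjoint_pair(2)[OF _ bounded_op_adj adj_cinner])

lemma cinner_selfadjoint_of_real:
  assumes T: "bounded_op T" and real: "\<And>x. cinner (T x) x \<in> \<real>"
  shows "cinner (T x) y = cinner x (T y)"
proof -
  define B where "B x y = cinner (T x) y - cinner x (T y)" for x y
  have diag: "B z z = 0" for z
    using real[of z] by (simp add: B_def Reals_cnj_iff cinner_commute[of z])
  have "B (x + y) (x + y) = B x x + B x y + B y x + B y y"
    by (simp add: B_def bounded_op_map_add[OF T] cinner_add_left cinner_add_right)
  then have sym: "B y x = - B x y" by (simp add: diag eq_neg_iff_add_eq_0 add.commute)
  have "B (x + scaleC \<i> y) (x + scaleC \<i> y) = B x x - \<i> * B x y + \<i> * B y x + B y y"
    by (simp add: B_def bounded_op_map_add[OF T] bounded_op_map_scaleC[OF T] cinner_add_left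
        cinner_add_right cinner_scaleC_left cinner_scaleC_right algebra_simps)
  then have "\<i> * B y x = \<i> * B x y" by (simp add: diag algebra_simps)
  with sym have "B x y = 0" by simp
  then show ?thesis by (simp add: B_def)
qed

lemma positive_op_bounded: "positive_op P \<Longrightarrow> bounded_op P"
  unfolding positive_op_def by blast

lemma positive_op_nonneg: "positive_op P \<Longrightarrow> 0 \<le> Re (cinner (P x) x)"
  unfolding positive_op_def by blast

lemma positive_op_selfadjoint: "positive_op P \<Longrightarrow> cinner (P x) y = cinner x (P y)"
  unfolding positive_op_def by (blast intro: cinner_selfadjoint_of_real)

lemma positive_opI:
  assumes "bounded_op P" "\<And>x y. cinner (P x) y = cinner x (P y)" "\<And>x. 0 \<le> Re (cinner (P x) x)"
  shows "positive_op P"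
  unfolding positive_op_def using assms by (metis Reals_cnj_iff cinner_commute)

lemma positive_op_adj_comp: "bounded_op X \<Longrightarrow> positive_op (adj X \<circ> X)"
  by (rule positive_opI)
    (simp_all add: bounded_op_comp bounded_op_adj adj_cinner[symmetric] adj_cinner_left cinner_self_Re)

lemma positive_op_Cauchy_Schwarz:
  assumes "positive_op P"
  shows "(cmod (cinner (P x) y))\<^sup>2 \<le> Re (cinner (P x) x) * Re (cinner (P y) y)"
proof (rule hermitian_form_Cauchy_Schwarz[where F="\<lambda>u v. cinner (P u) v"])
  show "cinner (P y) x = cnj (cinner (P x) y)" for x y
    by (metis assms cinner_commute positive_op_selfadjoint)
qed (simp_all add: assms positive_op_bounded bounded_op_map_add bounded_op_map_scaleC cinner_add_left
      cinner_scaleC_left positive_op_nonneg)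

lemma norm_square_le_positive_op:
  assumes P: "positive_op P"
  shows "(norm (P x))\<^sup>2 \<le> onorm P * Re (cinner (P x) x)"
proof (cases "P x = 0")
  case True
  then show ?thesis by simp
next
  case False
  have "((norm (P x))\<^sup>2)\<^sup>2 = (cmod (cinner (P x) (P x)))\<^sup>2" by (simp add: cinner_self norm_power)
  also have "\<dots> \<le> Re (cinner (P x) x) * Re (cinner (P (P x)) (P x))"
    by (rule positive_op_Cauchy_Schwarz[OF P])
  also have "\<dots> \<le> Re (cinner (P x) x) * (onorm P * (norm (P x))\<^sup>2)"
    by (intro mult_left_mono Re_cinner_le_onorm positive_op_bounded positive_op_nonneg P)
  finally have "((norm (P x))\<^sup>2)\<^sup>2 \<le> (onorm P * Re (cinner (P x) x)) * (norm (P x))\<^sup>2"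
    by (simp add: algebra_simps)
  then have "(norm (P x))\<^sup>2 * (norm (P x))\<^sup>2 \<le> (onorm P * Re (cinner (P x) x)) * (norm (P x))\<^sup>2"
    by (simp only: power2_eq_square[of "(norm (P x))\<^sup>2"])
  then show ?thesis by (rule mult_right_le_imp_le) (use False in simp)
qed

section \<open>Real powers of positive operators\<close>

text \<open>The operator \<open>A = I - P/\<parallel>P\<parallel>\<close> of \<open>op_pow_def\<close>; for \<open>P = 0\<close> it is the identity, as \<open>1/0 = 0\<close>.\<close>

definition normalized_complement :: "('a::chilbert \<Rightarrow> 'a) \<Rightarrow> 'a \<Rightarrow> 'a" where
  "normalized_complement P = (\<lambda>x. x - (1 / onorm P) *\<^sub>R P x)"

lemma bounded_op_normalized_complement:
  assumes P: "bounded_op P"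
  shows "bounded_op (normalized_complement P)"
  unfolding normalized_complement_def
proof (rule bounded_opI[where K="1 + \<bar>1 / onorm P\<bar> * onorm P"])
  fix x
  have "norm (x - (1 / onorm P) *\<^sub>R P x) \<le> norm x + \<bar>1 / onorm P\<bar> * (onorm P * norm x)"
    by (intro order_trans[OF norm_triangle_ineq4] add_left_mono)
      (simp add: divide_right_mono norm_bounded_op_le[OF P])
  then show "norm (x - (1 / onorm P) *\<^sub>R P x) \<le> (1 + \<bar>1 / onorm P\<bar> * onorm P) * norm x"
    by (simp add: algebra_simps)
qed (auto simp: bounded_op_map_add[OF P] bounded_op_map_scaleC[OF P] scaleC_diff_right
       scaleC_scaleR_commute algebra_simps)

lemma norm_normalized_complement_le:
  assumes P: "positive_op P"
  shows "norm (normalized_complement P x) \<le> norm x"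
proof (cases "onorm P = 0")
  case True
  then show ?thesis by (simp add: normalized_complement_def)
next
  case False
  define p where "p = onorm P"
  define r where "r = Re (cinner (P x) x)"
  have "0 < p" using False onorm_bounded_op_nonneg[OF positive_op_bounded[OF P]] by (simp add: p_def)
  have "0 \<le> r" using positive_op_nonneg[OF P] by (simp add: r_def)
  have "(norm (normalized_complement P x))\<^sup>2 = (norm x)\<^sup>2 + (1/p)\<^sup>2 * (norm (P x))\<^sup>2 - 2 * (1/p) * r"
    unfolding normalized_complement_def norm_diff_square
    by (simp add: p_def r_def cinner_scaleR_right power_mult_distrib cinner_commute[of x "P x"]
        power_divide)
  also have "\<dots> \<le> (norm x)\<^sup>2 + (1/p)\<^sup>2 * (p * r) - 2 * (1/p) * r"
    using mult_left_mono[OF norm_square_le_positive_op[OF P, of x], of "(1/p)\<^sup>2"]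
    by (simp add: p_def r_def)
  also have "\<dots> = (norm x)\<^sup>2 - r / p" using \<open>0 < p\<close> by (simp add: power2_eq_square field_simps)
  also have "\<dots> \<le> (norm x)\<^sup>2" using \<open>0 < p\<close> \<open>0 \<le> r\<close> by simp
  finally show ?thesis by (rule power2_le_imp_le) simp
qed

lemma normalized_complement_power_selfadjoint:
  assumes P: "positive_op P"
  shows "cinner ((normalized_complement P ^^ k) x) y = cinner x ((normalized_complement P ^^ k) y)"
proof (induction k arbitrary: x)
  case (Suc k)
  have "cinner (normalized_complement P z) y = cinner z (normalized_complement P y)" for z y
    by (simp add: normalized_complement_def cinner_diff_left cinner_diff_right cinner_scaleR_left
        cinner_scaleR_right positive_op_selfadjoint[OF P])
  then show ?case by (simp add: Suc.IH funpow_swap1)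
qed simp

lemma normalized_complement_power_intertwine:
  assumes X: "bounded_op X" and XP: "\<And>x. X (P x) = Q (X x)" and "onorm P = onorm Q"
  shows "X ((normalized_complement P ^^ k) x) = (normalized_complement Q ^^ k) (X x)"
proof (induction k)
  case (Suc k)
  have "X (normalized_complement P y) = normalized_complement Q (X y)" for y
    using \<open>onorm P = onorm Q\<close>
    by (simp add: normalized_complement_def bounded_op_map_diff[OF X] bounded_op_map_scaleR[OF X] XP)
  then show ?case by (simp add: Suc.IH)
qed simp

definition one_minus_powr_coeff :: "real \<Rightarrow> nat \<Rightarrow> real" where
  "one_minus_powr_coeff t k = (t gchoose k) * (-1) ^ k"

lemma summable_abs_gbinomial:
  assumes "0 \<le> (t::real)"
  shows "summable (\<lambda>k. \<bar>t gchoose k\<bar>)"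
proof (cases "t = 0")
  case True
  then have "(\<lambda>k. \<bar>t gchoose k\<bar>) = (\<lambda>k. if k = 0 then 1 else 0)"
    by (auto simp: fun_eq_iff gbinomial_0 gr0_conv_Suc)
  then show ?thesis by (simp add: summable_finite[of "{0}"])
next
  case False
  with assms have "0 < t" by simp
  define g where "g k = \<bar>t gchoose k\<bar>" for k
  define a where "a k = real k * g k" for k
  define N where "N = nat \<lceil>t\<rceil>"
  \<comment> \<open>beyond \<open>N\<close> the sequence \<open>k |t gchoose k|\<close> decreases, and \<open>t |t gchoose k|\<close> is its decrement\<close>
  have telescope: "t * g k = a k - a (Suc k)" if "N \<le> k" for k
  proof -
    have "t \<le> real k" using that unfolding N_def by linarith
    have "a (Suc k) = \<bar>real (Suc k) * (t gchoose Suc k)\<bar>" by (simp add: a_def g_def abs_mult)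
    also have "\<dots> = \<bar>(t - real k) * (t gchoose k)\<bar>"
      using gbinomial_mult_1[of t k] by (simp add: algebra_simps)
    also have "\<dots> = (real k - t) * g k" using \<open>t \<le> real k\<close> by (simp add: g_def abs_mult)
    finally show ?thesis by (simp add: a_def algebra_simps)
  qed
  have "0 \<le> g k" "0 \<le> a k" for k by (simp_all add: g_def a_def)
  have partial: "(\<Sum>k<N + n. g k) = (\<Sum>k<N. g k) + (a N - a (N + n)) / t" for n
  proof (induction n)
    case (Suc n)
    have "g (N + n) = (a (N + n) - a (Suc (N + n))) / t"
      using telescope[of "N + n"] \<open>0 < t\<close> by (simp add: field_simps)
    then show ?case using Suc.IH by (simp add: diff_divide_distrib)
  qed simp
  have "(\<Sum>k<n. g k) \<le> (\<Sum>k<N. g k) + a N / t" for n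
  proof -
    have "(\<Sum>k<n. g k) \<le> (\<Sum>k<N + n. g k)" by (intro sum_mono2) (auto simp: \<open>\<And>k. 0 \<le> g k\<close>)
    also have "\<dots> \<le> (\<Sum>k<N. g k) + a N / t"
      unfolding partial using \<open>0 \<le> a (N + n)\<close> \<open>0 < t\<close> by (simp add: diff_divide_distrib)
    finally show ?thesis .
  qed
  then show ?thesis unfolding g_def[symmetric] by (intro summableI_nonneg_bounded[OF \<open>\<And>k. 0 \<le> g k\<close>])
qed

lemma summable_abs_one_minus_powr_coeff: "0 \<le> t \<Longrightarrow> summable (\<lambda>k. \<bar>one_minus_powr_coeff t k\<bar>)"
  by (simp add: one_minus_powr_coeff_def abs_mult summable_abs_gbinomial)

lemma one_minus_powr_coeff_Vandermonde:
  "(\<Sum>i\<le>k. one_minus_powr_coeff s i * one_minus_powr_coeff t (k - i)) = one_minus_powr_coeff (s + t) k"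
proof -
  have "one_minus_powr_coeff s i * one_minus_powr_coeff t (k - i)
      = (s gchoose i) * (t gchoose (k - i)) * (-1) ^ k" if "i \<le> k" for i
    using that unfolding one_minus_powr_coeff_def by (simp add: mult_ac flip: power_add)
  then have "(\<Sum>i\<le>k. one_minus_powr_coeff s i * one_minus_powr_coeff t (k - i))
      = (\<Sum>i\<in>{0..k}. (s gchoose i) * (t gchoose (k - i))) * (-1) ^ k"
    by (simp add: sum_distrib_right atMost_atLeast0)
  then show ?thesis by (simp add: gbinomial_Vandermonde one_minus_powr_coeff_def)
qed

lemma tendsto_diff_div_2:
  fixes f :: "nat \<Rightarrow> 'a::real_normed_vector"
  assumes "f \<longlonglongrightarrow> l"
  shows "(\<lambda>n. f n - f (n div 2)) \<longlonglongrightarrow> 0"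
proof -
  have "filterlim (\<lambda>n::nat. n div 2) sequentially sequentially"
    unfolding filterlim_at_top eventually_sequentially
  proof
    show "\<exists>N. \<forall>n\<ge>N. Z \<le> n div 2" for Z :: nat
      by (intro exI[of _ "2 * Z"] allI impI) presburger
  qed
  then have "(\<lambda>n. f (n div 2)) \<longlonglongrightarrow> l" by (rule filterlim_compose[OF assms])
  then show ?thesis using tendsto_diff[OF assms] by fastforce
qed

lemma Cauchy_product_sums_bilinear:
  fixes a :: "nat \<Rightarrow> 'a::banach" and b :: "nat \<Rightarrow> 'b::banach"
    and prod :: "'a \<Rightarrow> 'b \<Rightarrow> 'c::real_normed_vector"
  assumes bilinear: "bounded_bilinear prod" and norm_prod: "\<And>x y. norm (prod x y) \<le> norm x * norm y"
    and a: "summable (\<lambda>k. norm (a k))" and b: "summable (\<lambda>k. norm (b k))"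
  shows "(\<lambda>k. \<Sum>i\<le>k. prod (a i) (b (k - i))) sums (prod (\<Sum>k. a k) (\<Sum>k. b k))"
proof -
  interpret bounded_bilinear prod by (rule bilinear)
  \<comment> \<open>partial sums of the Cauchy product are sums over triangles, which lie between two squares\<close>
  define square where "square n = {..<n} \<times> {..<n}" for n :: nat
  define triangle where "triangle n = {(i, j). i + j < n}" for n :: nat
  define g where "g = (\<lambda>(i, j). prod (a i) (b j))"
  define f where "f = (\<lambda>(i, j). norm (a i) * norm (b j))"
  have fin: "finite (square n)" "finite (triangle n)" for n
    by (auto simp: square_def triangle_def intro: finite_subset[of _ "{..<n} \<times> {..<n}"])
  have tri_sq: "triangle n \<subseteq> square n" and sq_tri: "square (n div 2) \<subseteq> triangle n" for n
    by (auto simp: square_def triangle_def)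
  have sum_g_square: "sum g (square n) = prod (\<Sum>k<n. a k) (\<Sum>k<n. b k)" for n
    by (simp only: square_def g_def sum_left) (simp add: sum_right sum.cartesian_product)
  have sum_f_square: "sum f (square n) = (\<Sum>k<n. norm (a k)) * (\<Sum>k<n. norm (b k))" for n
    by (simp add: square_def f_def sum_product sum.cartesian_product)
  have "(\<lambda>n. sum f (square n)) \<longlonglongrightarrow> (\<Sum>k. norm (a k)) * (\<Sum>k. norm (b k))"
    unfolding sum_f_square using a b by (intro tendsto_mult summable_LIMSEQ)
  then have lim_f: "(\<lambda>n. sum f (square n) - sum f (square (n div 2))) \<longlonglongrightarrow> 0"
    by (rule tendsto_diff_div_2)
  have bound: "norm (sum g (square n) - sum g (triangle n)) \<le> sum f (square n) - sum f (square (n div 2))"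
    for n
  proof -
    have "norm (sum g (square n) - sum g (triangle n)) = norm (sum g (square n - triangle n))"
      by (simp add: sum_diff fin tri_sq)
    also have "\<dots> \<le> sum f (square n - triangle n)"
      by (intro order_trans[OF norm_sum sum_mono]) (auto simp: f_def g_def norm_prod)
    also have "\<dots> \<le> sum f (square n - square (n div 2))"
      by (intro sum_mono2 finite_Diff fin Diff_mono sq_tri) (auto simp: f_def)
    also have "\<dots> = sum f (square n) - sum f (square (n div 2))"
      by (intro sum_diff fin) (auto simp: square_def)
    finally show ?thesis .
  qed
  have "(\<lambda>n. sum g (square n) - sum g (triangle n)) \<longlonglongrightarrow> 0"
    by (rule Lim_null_comparison[OF always_eventually[OF allI[OF bound]] lim_f])
  moreover have "(\<lambda>n. sum g (square n)) \<longlonglongrightarrow> prod (\<Sum>k. a k) (\<Sum>k. b k)"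
    unfolding sum_g_square
    by (intro tendsto summable_LIMSEQ summable_norm_cancel[OF a] summable_norm_cancel[OF b])
  ultimately have "(\<lambda>n. sum g (triangle n)) \<longlonglongrightarrow> prod (\<Sum>k. a k) (\<Sum>k. b k)"
    using tendsto_diff by fastforce
  then show ?thesis
    by (simp add: sums_def sum.triangle_reindex triangle_def g_def)
qed

fun blinfun_power :: "('a::real_normed_vector \<Rightarrow>\<^sub>L 'a) \<Rightarrow> nat \<Rightarrow> ('a \<Rightarrow>\<^sub>L 'a)" where
  "blinfun_power B 0 = id_blinfun"
| "blinfun_power B (Suc k) = B o\<^sub>L blinfun_power B k"

lemma norm_blinfun_power_le_1: "norm B \<le> 1 \<Longrightarrow> norm (blinfun_power B k) \<le> 1"
proof (induction k)
  case (Suc k)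
  then show ?case
    using norm_blinfun_compose[of B "blinfun_power B k"] mult_le_one[of "norm B" "norm (blinfun_power B k)"]
    by simp
qed (simp add: norm_blinfun_id_le)

lemma blinfun_power_add: "blinfun_power B (i + j) = blinfun_power B i o\<^sub>L blinfun_power B j"
  by (induction i) (auto intro!: blinfun_eqI)

lemma blinfun_apply_blinfun_power:
  "bounded_op P \<Longrightarrow>
    blinfun_apply (blinfun_power (Blinfun (normalized_complement P)) k) = normalized_complement P ^^ k"
  by (induction k)
    (auto simp: fun_eq_iff bounded_linear_Blinfun_apply bounded_op_bounded_linear
      bounded_op_normalized_complement)

text \<open>\<open>(P / \<parallel>P\<parallel>)^t\<close>, as a series in the Banach space of bounded operators, where the Cauchy
product of two such series is available.\<close>

definition normalized_pow :: "('a::chilbert \<Rightarrow> 'a) \<Rightarrow> real \<Rightarrow> ('a \<Rightarrow>\<^sub>L 'a)" where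
  "normalized_pow P t =
    (\<Sum>k. one_minus_powr_coeff t k *\<^sub>R blinfun_power (Blinfun (normalized_complement P)) k)"

lemma summable_norm_normalized_pow:
  assumes P: "positive_op P" and "0 \<le> t"
  shows "summable (\<lambda>k. norm (one_minus_powr_coeff t k *\<^sub>R blinfun_power (Blinfun (normalized_complement P)) k))"
proof (rule summable_comparison_test'[OF summable_abs_one_minus_powr_coeff[OF \<open>0 \<le> t\<close>]])
  have A: "norm (Blinfun (normalized_complement P)) \<le> 1"
    unfolding norm_blinfun.rep_eq
    by (simp add: bounded_linear_Blinfun_apply bounded_op_bounded_linear bounded_op_normalized_complement
        positive_op_bounded[OF P] onorm_le_nonneg norm_normalized_complement_le[OF P])
  show "norm (norm (one_minus_powr_coeff t k *\<^sub>R blinfun_power (Blinfun (normalized_complement P)) k))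
      \<le> \<bar>one_minus_powr_coeff t k\<bar>" for k
    using norm_blinfun_power_le_1[OF A, of k] by (simp add: mult_left_le)
qed

lemma normalized_pow_apply:
  assumes P: "positive_op P" and "0 \<le> t"
  shows "summable (\<lambda>k. one_minus_powr_coeff t k *\<^sub>R (normalized_complement P ^^ k) x)"
    and "blinfun_apply (normalized_pow P t) x = (\<Sum>k. one_minus_powr_coeff t k *\<^sub>R (normalized_complement P ^^ k) x)"
proof -
  have "bounded_linear (\<lambda>F. blinfun_apply F x)" by simp
  note apply_series = bounded_linear.summable[OF this] bounded_linear.suminf[OF this]
  have "summable (\<lambda>k. one_minus_powr_coeff t k *\<^sub>R blinfun_power (Blinfun (normalized_complement P)) k)"
    by (rule summable_norm_cancel[OF summable_norm_normalized_pow[OF assms]])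
  from apply_series[OF this] show
    "summable (\<lambda>k. one_minus_powr_coeff t k *\<^sub>R (normalized_complement P ^^ k) x)"
    "blinfun_apply (normalized_pow P t) x = (\<Sum>k. one_minus_powr_coeff t k *\<^sub>R (normalized_complement P ^^ k) x)"
    by (simp_all add: normalized_pow_def blinfun_apply_blinfun_power positive_op_bounded[OF P]
        blinfun.scaleR_left)
qed

lemma normalized_pow_add:
  assumes P: "positive_op P" and "0 \<le> s" "0 \<le> t"
  shows "normalized_pow P s o\<^sub>L normalized_pow P t = normalized_pow P (s + t)"
proof -
  let ?A = "blinfun_power (Blinfun (normalized_complement P))"
  let ?c = "one_minus_powr_coeff"
  have "(\<lambda>k. \<Sum>i\<le>k. (?c s i *\<^sub>R ?A i) o\<^sub>L (?c t (k - i) *\<^sub>R ?A (k - i)))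
      sums (normalized_pow P s o\<^sub>L normalized_pow P t)"
    unfolding normalized_pow_def
    by (rule Cauchy_product_sums_bilinear[OF bounded_bilinear_blinfun_compose norm_blinfun_compose
          summable_norm_normalized_pow[OF P \<open>0 \<le> s\<close>] summable_norm_normalized_pow[OF P \<open>0 \<le> t\<close>]])
  moreover have "(\<Sum>i\<le>k. (?c s i *\<^sub>R ?A i) o\<^sub>L (?c t (k - i) *\<^sub>R ?A (k - i))) = ?c (s + t) k *\<^sub>R ?A k" for k
  proof -
    have "(?c s i *\<^sub>R ?A i) o\<^sub>L (?c t (k - i) *\<^sub>R ?A (k - i)) = (?c s i * ?c t (k - i)) *\<^sub>R ?A k"
      if "i \<le> k" for i
    proof -
      have "?A i o\<^sub>L ?A (k - i) = ?A (i + (k - i))" by (rule blinfun_power_add[symmetric])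
      also have "i + (k - i) = k" using that by simp
      finally have "?A i o\<^sub>L ?A (k - i) = ?A k" .
      then show ?thesis
        by (simp add: bounded_bilinear.scaleR_left[OF bounded_bilinear_blinfun_compose]
            bounded_bilinear.scaleR_right[OF bounded_bilinear_blinfun_compose])
    qed
    then show ?thesis
      by (simp add: scaleR_sum_left[symmetric] one_minus_powr_coeff_Vandermonde)
  qed
  moreover have "(\<lambda>k. ?c (s + t) k *\<^sub>R ?A k) sums normalized_pow P (s + t)"
    unfolding normalized_pow_def using \<open>0 \<le> s\<close> \<open>0 \<le> t\<close>
    by (intro summable_sums summable_norm_cancel[OF summable_norm_normalized_pow[OF P]]) simp
  ultimately show ?thesis by (simp add: sums_unique2)
qed

lemma bounded_linear_scaleC: "bounded_linear (\<lambda>v::'a::chilbert. scaleC a v)"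
  by (rule bounded_linear_intro[where K="cmod a"])
    (simp_all add: scaleC_add_right scaleC_scaleR_commute norm_scaleC mult.commute)

lemma bounded_linear_cinner_left: "bounded_linear (\<lambda>v::'a::chilbert. cinner v y)"
  by (rule bounded_linear_intro[where K="norm y"])
    (simp_all add: cinner_add_left cinner_scaleR_left scaleR_conv_of_real cinner_Cauchy_Schwarz)

lemma bounded_linear_cinner_right: "bounded_linear (\<lambda>v::'a::chilbert. cinner x v)"
proof (rule bounded_linear_intro[where K="norm x"])
  show "norm (cinner x v) \<le> norm v * norm x" for v
    using cinner_Cauchy_Schwarz[of x v] by (simp add: mult.commute)
qed (simp_all add: cinner_add_right cinner_scaleR_right scaleR_conv_of_real)

lemma op_pow_0 [simp]: "op_pow P 0 = id"
  by (simp add: op_pow_def)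

lemma op_pow_eq_series:
  "t \<noteq> 0 \<Longrightarrow> op_pow P t x
    = onorm P powr t *\<^sub>R (\<Sum>k. one_minus_powr_coeff t k *\<^sub>R (normalized_complement P ^^ k) x)"
  by (simp add: op_pow_def normalized_complement_def one_minus_powr_coeff_def Let_def onorm_zero)

lemma op_pow_eq_normalized_pow:
  "positive_op P \<Longrightarrow> 0 < t \<Longrightarrow> op_pow P t x = onorm P powr t *\<^sub>R blinfun_apply (normalized_pow P t) x"
  by (simp add: op_pow_eq_series normalized_pow_apply)

lemma op_pow_1:
  assumes P: "bounded_op P"
  shows "op_pow P 1 = P"
proof
  fix x
  have "one_minus_powr_coeff 1 k = (if k = 0 then 1 else if k = 1 then -1 else 0)" for k
  proof -
    have "(1::real) gchoose k = real (1 choose k)" using binomial_gbinomial[of 1 k, where 'a=real] by simp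
    then show ?thesis by (cases k) (auto simp: one_minus_powr_coeff_def binomial_eq_0 gr0_conv_Suc)
  qed
  then have "(\<Sum>k. one_minus_powr_coeff 1 k *\<^sub>R (normalized_complement P ^^ k) x)
      = (\<Sum>k\<in>{0,1}. one_minus_powr_coeff 1 k *\<^sub>R (normalized_complement P ^^ k) x)"
    by (intro suminf_finite) auto
  then show "op_pow P 1 x = P x"
    using onorm_eq_0[OF bounded_op_bounded_linear[OF P]] onorm_bounded_op_nonneg[OF P]
    by (cases "onorm P = 0") (auto simp: op_pow_eq_series normalized_complement_def
        \<open>\<And>k. one_minus_powr_coeff 1 k = _\<close>)
qed

lemma op_pow_series_scaleC:
  assumes P: "positive_op P" and "0 \<le> t"
  shows "(\<Sum>k. one_minus_powr_coeff t k *\<^sub>R (normalized_complement P ^^ k) (scaleC a x))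
    = scaleC a (\<Sum>k. one_minus_powr_coeff t k *\<^sub>R (normalized_complement P ^^ k) x)"
proof -
  have "(normalized_complement P ^^ k) (scaleC a x) = scaleC a ((normalized_complement P ^^ k) x)" for k
    by (induction k)
      (simp_all add: bounded_op_map_scaleC[OF bounded_op_normalized_complement[OF positive_op_bounded[OF P]]])
  then show ?thesis
    using bounded_linear.suminf[OF bounded_linear_scaleC normalized_pow_apply(1)[OF assms]]
    by (simp add: scaleC_scaleR_commute)
qed

lemma bounded_op_op_pow:
  assumes P: "positive_op P" and "0 \<le> t"
  shows "bounded_op (op_pow P t)"
proof (cases "t = 0")
  case True
  then show ?thesis by (simp add: bounded_op_id)
next
  case False
  with \<open>0 \<le> t\<close> have "0 < t" by simp
  let ?c = "onorm P powr t"
  show ?thesis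
  proof (rule bounded_opI[where K="?c * norm (normalized_pow P t)"])
    show "op_pow P t (scaleC a x) = scaleC a (op_pow P t x)" for a x
      using False by (simp add: op_pow_eq_series op_pow_series_scaleC[OF assms] scaleC_scaleR_commute)
    show "norm (op_pow P t x) \<le> ?c * norm (normalized_pow P t) * norm x" for x
      using norm_blinfun[of "normalized_pow P t" x]
      by (simp add: op_pow_eq_normalized_pow[OF P \<open>0 < t\<close>] mult.assoc mult_left_mono)
  qed (simp add: op_pow_eq_normalized_pow[OF P \<open>0 < t\<close>] blinfun.add_right scaleR_add_right)
qed

lemma op_pow_selfadjoint:
  assumes P: "positive_op P" and "0 \<le> t"
  shows "cinner (op_pow P t x) y = cinner x (op_pow P t y)"
proof (cases "t = 0")
  case False
  let ?S = "\<lambda>x. \<Sum>k. one_minus_powr_coeff t k *\<^sub>R (normalized_complement P ^^ k) x"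
  have "cinner (?S x) y = (\<Sum>k. cinner (one_minus_powr_coeff t k *\<^sub>R (normalized_complement P ^^ k) x) y)"
    by (rule bounded_linear.suminf[OF bounded_linear_cinner_left normalized_pow_apply(1)[OF assms]])
  also have "\<dots> = (\<Sum>k. cinner x (one_minus_powr_coeff t k *\<^sub>R (normalized_complement P ^^ k) y))"
    by (simp add: cinner_scaleR_left cinner_scaleR_right normalized_complement_power_selfadjoint[OF P])
  also have "\<dots> = cinner x (?S y)"
    by (rule bounded_linear.suminf[OF bounded_linear_cinner_right normalized_pow_apply(1)[OF assms], symmetric])
  finally show ?thesis
    using False by (simp add: op_pow_eq_series cinner_scaleR_left cinner_scaleR_right)
qed simp

lemma op_pow_add:
  assumes P: "positive_op P" and "0 \<le> s" "0 \<le> t"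
  shows "op_pow P s (op_pow P t x) = op_pow P (s + t) x"
proof (cases "s = 0 \<or> t = 0")
  case False
  with assms have "0 < s" "0 < t" "0 < s + t" by auto
  then have "op_pow P s (op_pow P t x)
      = (onorm P powr s * onorm P powr t) *\<^sub>R blinfun_apply (normalized_pow P s o\<^sub>L normalized_pow P t) x"
    by (simp add: op_pow_eq_normalized_pow[OF P] blinfun.scaleR_right)
  also have "\<dots> = op_pow P (s + t) x"
    using \<open>0 < s + t\<close> by (simp add: normalized_pow_add[OF assms] op_pow_eq_normalized_pow[OF P] powr_add)
  finally show ?thesis .
qed auto

lemma norm_op_pow_square:
  assumes P: "positive_op P" and "0 \<le> t"
  shows "(norm (op_pow P t x))\<^sup>2 = Re (cinner (op_pow P (2 * t) x) x)"
proof -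
  have "op_pow P (2 * t) x = op_pow P t (op_pow P t x)"
    by (simp only: mult_2 op_pow_add[OF P \<open>0 \<le> t\<close> \<open>0 \<le> t\<close>])
  then have "cinner (op_pow P (2 * t) x) x = cinner (op_pow P t x) (op_pow P t x)"
    by (simp only: op_pow_selfadjoint[OF assms])
  then show ?thesis by (simp only: cinner_self_Re)
qed

lemma positive_op_op_pow:
  assumes P: "positive_op P" and "0 \<le> t"
  shows "positive_op (op_pow P t)"
proof (rule positive_opI[OF bounded_op_op_pow[OF assms] op_pow_selfadjoint[OF assms]])
  show "0 \<le> Re (cinner (op_pow P t x) x)" for x
    using norm_op_pow_square[OF P, of "t / 2" x, symmetric] \<open>0 \<le> t\<close> by simp
qed

lemma op_pow_intertwine:
  assumes X: "bounded_op X" and P: "positive_op P" and Q: "positive_op Q" and "0 \<le> t"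
    and XP: "\<And>x. X (P x) = Q (X x)" and "onorm P = onorm Q"
  shows "X (op_pow P t x) = op_pow Q t (X x)"
proof (cases "t = 0")
  case False
  have "X (\<Sum>k. one_minus_powr_coeff t k *\<^sub>R (normalized_complement P ^^ k) x)
      = (\<Sum>k. X (one_minus_powr_coeff t k *\<^sub>R (normalized_complement P ^^ k) x))"
    by (rule bounded_linear.suminf[OF bounded_op_bounded_linear[OF X] normalized_pow_apply(1)[OF P \<open>0 \<le> t\<close>]])
  then show ?thesis
    using False \<open>onorm P = onorm Q\<close>
    by (simp add: op_pow_eq_series bounded_op_map_scaleR[OF X]
        normalized_complement_power_intertwine[OF X XP \<open>onorm P = onorm Q\<close>])
qed simp

text \<open>The kernel of \<open>P^u\<close> (\<open>u > 0\<close>) lies in that of every \<open>P^g\<close>, \<open>g > 0\<close>: halving the exponent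
preserves it, since \<open>\<parallel>P^{u/2} v\<parallel>\<^sup>2 = \<langle>P^u v, v\<rangle>\<close>.\<close>

lemma op_pow_kernel:
  assumes P: "positive_op P" and "0 < u" "0 < g" and "op_pow P u v = 0"
  shows "op_pow P g v = 0"
proof -
  have halves: "op_pow P (u / 2 ^ n) v = 0" for n
  proof (induction n)
    case (Suc n)
    have "(norm (op_pow P (u / 2 ^ Suc n) v))\<^sup>2 = Re (cinner (op_pow P (u / 2 ^ n) v) v)"
      using norm_op_pow_square[OF P, of "u / 2 ^ Suc n" v] \<open>0 < u\<close> by simp
    then show ?case using Suc.IH by simp
  qed (use \<open>op_pow P u v = 0\<close> in simp)
  obtain n where "u / g < 2 ^ n" using real_arch_pow[of 2 "u / g"] by auto
  then have "u / 2 ^ n < g" using \<open>0 < g\<close> by (simp add: field_simps)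
  then have "op_pow P g v = op_pow P (g - u / 2 ^ n) (op_pow P (u / 2 ^ n) v)"
    using op_pow_add[OF P, of "g - u / 2 ^ n" "u / 2 ^ n" v] \<open>0 < u\<close> by simp
  also have "\<dots> = 0"
    using bounded_op_map_zero[OF bounded_op_op_pow[OF P]] halves \<open>u / 2 ^ n < g\<close> by simp
  finally show ?thesis .
qed

lemma positive_op_op_abs: "bounded_op X \<Longrightarrow> positive_op (op_abs X)"
  unfolding op_abs_def by (simp add: positive_op_op_pow positive_op_adj_comp)

lemma op_abs_op_abs:
  assumes X: "bounded_op X"
  shows "op_abs X (op_abs X x) = adj X (X x)"
  using op_pow_add[OF positive_op_adj_comp[OF X], of "1/2" "1/2" x]
  by (simp add: op_abs_def op_pow_1 bounded_op_comp bounded_op_adj X)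

lemma norm_op_abs:
  assumes X: "bounded_op X"
  shows "norm (op_abs X x) = norm (X x)"
proof -
  have "(norm (op_abs X x))\<^sup>2 = (norm (X x))\<^sup>2"
    by (simp add: cinner_self_Re[symmetric] positive_op_selfadjoint[OF positive_op_op_abs[OF X]]
        op_abs_op_abs[OF X] adj_cinner[OF X])
  then show ?thesis by (simp add: power2_eq_iff_nonneg)
qed

lemma onorm_op_abs:
  fixes X :: "'a::chilbert \<Rightarrow> 'a"
  assumes X: "bounded_op X"
  shows "onorm (op_abs X) = onorm X"
proof -
  have R: "positive_op (op_abs X)" by (rule positive_op_op_abs[OF X])
  have "(onorm (op_abs X))\<^sup>2 = onorm (op_abs X \<circ> op_abs X)"
    by (rule onorm_adjoint_pair(2)[OF positive_op_bounded[OF R] positive_op_bounded[OF R], symmetric])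
      (rule positive_op_selfadjoint[OF R])
  also have "onorm (op_abs X \<circ> op_abs X) = onorm (adj X \<circ> X)"
    by (rule arg_cong[where f=onorm]) (auto simp: op_abs_op_abs[OF X])
  also have "\<dots> = (onorm X)\<^sup>2" by (rule onorm_adj_comp[OF X])
  finally show ?thesis
    using onorm_bounded_op_nonneg[OF X] onorm_bounded_op_nonneg[OF positive_op_bounded[OF R]]
    by (simp add: power2_eq_iff_nonneg)
qed

lemma op_abs_intertwine:
  fixes X :: "'a::chilbert \<Rightarrow> 'a"
  assumes X: "bounded_op X" and "0 \<le> t"
  shows "X (op_pow (op_abs X) t x) = op_pow (op_abs (adj X)) t (X x)"
proof (rule op_pow_intertwine[OF X positive_op_op_abs[OF X] positive_op_op_abs[OF bounded_op_adj[OF X]] \<open>0 \<le> t\<close>])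
  have XX: "adj (adj X) \<circ> adj X = X \<circ> adj X" by (simp add: adj_adj[OF X])
  show "X (op_abs X x) = op_abs (adj X) (X x)" for x
    unfolding op_abs_def
  proof (rule op_pow_intertwine[OF X positive_op_adj_comp[OF X] positive_op_adj_comp[OF bounded_op_adj[OF X]]])
    show "onorm (adj X \<circ> X) = onorm (adj (adj X) \<circ> adj X)"
      by (simp add: onorm_adj_comp X bounded_op_adj onorm_adj)
  qed (simp_all add: XX)
  show "onorm (op_abs X) = onorm (op_abs (adj X))"
    by (simp add: onorm_op_abs X bounded_op_adj onorm_adj)
qed

section \<open>The mixed Schwarz inequality\<close>

lemma csubspace_range: "bounded_op T \<Longrightarrow> csubspace (range T)"
  unfolding csubspace_def
  by (metis (no_types, lifting) bounded_op_map_add bounded_op_map_scaleC bounded_op_map_zero rangeE rangeI)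

lemma mixed_Schwarz_range:
  fixes X :: "'a::chilbert \<Rightarrow> 'a"
  assumes X: "bounded_op X" and "0 \<le> g" "g \<le> 1"
  shows "cmod (cinner (X (op_pow (op_abs X) (1 - g) w)) y)
    \<le> norm (op_pow (op_abs X) g (op_pow (op_abs X) (1 - g) w)) * norm (op_pow (op_abs (adj X)) (1 - g) y)"
proof -
  let ?R = "op_pow (op_abs X)" and ?S = "op_pow (op_abs (adj X))"
  have R: "positive_op (op_abs X)" and S: "positive_op (op_abs (adj X))"
    by (simp_all add: positive_op_op_abs X bounded_op_adj)
  have "0 \<le> 1 - g" using \<open>g \<le> 1\<close> by simp
  \<comment> \<open>\<open>X |X|^(1-g) = |X*|^(1-g) X\<close> moves the power to \<open>y\<close>\<close>
  have "cinner (X (?R (1 - g) w)) y = cinner (X w) (?S (1 - g) y)"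
    by (simp add: op_abs_intertwine[OF X \<open>0 \<le> 1 - g\<close>] op_pow_selfadjoint[OF S \<open>0 \<le> 1 - g\<close>])
  then have "cmod (cinner (X (?R (1 - g) w)) y) \<le> norm (X w) * norm (?S (1 - g) y)"
    by (simp add: cinner_Cauchy_Schwarz)
  also have "norm (X w) = norm (?R g (?R (1 - g) w))"
    using op_pow_add[OF R \<open>0 \<le> g\<close> \<open>0 \<le> 1 - g\<close>, of w]
    by (simp add: norm_op_abs[OF X] op_pow_1 positive_op_bounded[OF R])
  finally show ?thesis .
qed

lemma mixed_Schwarz_closure_range:
  fixes X :: "'a::chilbert \<Rightarrow> 'a"
  assumes X: "bounded_op X" and "0 \<le> g" "g \<le> 1"
    and z: "z \<in> closure (range (op_pow (op_abs X) (1 - g)))"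
  shows "cmod (cinner (X z) y) \<le> norm (op_pow (op_abs X) g z) * norm (op_pow (op_abs (adj X)) (1 - g) y)"
proof -
  let ?R = "op_pow (op_abs X)" and ?S = "op_pow (op_abs (adj X))"
  obtain f where f: "\<And>n. f n \<in> range (?R (1 - g))" "f \<longlonglongrightarrow> z"
    using z unfolding closure_sequential by blast
  show ?thesis
  proof (rule LIMSEQ_le)
    show "(\<lambda>n. cmod (cinner (X (f n)) y)) \<longlonglongrightarrow> cmod (cinner (X z) y)"
      by (intro tendsto_norm bounded_linear.tendsto[OF bounded_linear_cinner_left]
          bounded_linear.tendsto[OF bounded_op_bounded_linear[OF X]] f(2))
    show "(\<lambda>n. norm (?R g (f n)) * norm (?S (1 - g) y)) \<longlonglongrightarrow> norm (?R g z) * norm (?S (1 - g) y)"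
      by (intro tendsto_mult tendsto_const tendsto_norm f(2) bounded_linear.tendsto[OF
          bounded_op_bounded_linear[OF bounded_op_op_pow[OF positive_op_op_abs[OF X] \<open>0 \<le> g\<close>]]])
    show "\<exists>N. \<forall>n\<ge>N. cmod (cinner (X (f n)) y) \<le> norm (?R g (f n)) * norm (?S (1 - g) y)"
      using f(1) mixed_Schwarz_range[OF assms(1-3)] by (metis rangeE)
  qed
qed

text \<open>For \<open>0 < g\<close> decompose \<open>x\<close> along the closure of the range of \<open>|X|^(1-g)\<close> and its orthogonal
complement; the latter lies in the kernel of \<open>|X|^(1-g)\<close>, hence in those of \<open>|X|^g\<close> and \<open>X\<close>.\<close>

lemma mixed_Schwarz:
  fixes X :: "'a::chilbert \<Rightarrow> 'a"
  assumes X: "bounded_op X" and "0 \<le> g" "g \<le> 1"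
  shows "cmod (cinner (X x) y) \<le> norm (op_pow (op_abs X) g x) * norm (op_pow (op_abs (adj X)) (1 - g) y)"
proof (cases "g = 0")
  case True
  have "cmod (cinner (X x) y) \<le> norm x * norm (adj X y)"
    by (simp add: adj_cinner[OF X] cinner_Cauchy_Schwarz)
  with True show ?thesis
    by (simp add: op_pow_1 positive_op_bounded positive_op_op_abs bounded_op_adj X norm_op_abs)
next
  case False
  let ?R = "op_pow (op_abs X)"
  have R: "positive_op (op_abs X)" by (rule positive_op_op_abs[OF X])
  have "0 < g" "0 \<le> 1 - g" using False \<open>0 \<le> g\<close> \<open>g \<le> 1\<close> by simp_all
  have Rs: "bounded_op (?R (1 - g))" by (rule bounded_op_op_pow[OF R \<open>0 \<le> 1 - g\<close>])
  have Rg: "bounded_op (?R g)" by (rule bounded_op_op_pow[OF R \<open>0 \<le> g\<close>])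
  obtain x0 where x0: "x0 \<in> closure (range (?R (1 - g)))"
    and orth: "\<And>m. m \<in> range (?R (1 - g)) \<Longrightarrow> cinner (x - x0) m = 0"
    using orthogonal_decomposition[OF csubspace_range[OF Rs], of x] by blast
  have "cinner (?R (1 - g) (x - x0)) (?R (1 - g) (x - x0)) = 0"
    using orth[of "?R (1 - g) (?R (1 - g) (x - x0))"] by (simp add: op_pow_selfadjoint[OF R \<open>0 \<le> 1 - g\<close>])
  then have kernel: "?R (1 - g) (x - x0) = 0" by (simp add: cinner_self_eq_0)
  have "?R g (x - x0) = 0"
  proof (cases "g = 1")
    case True
    with kernel show ?thesis using bounded_op_map_zero[OF Rg] by simp
  next
    case False
    with \<open>g \<le> 1\<close> have "0 < 1 - g" by simp
    then show ?thesis by (rule op_pow_kernel[OF R _ \<open>0 < g\<close> kernel])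
  qed
  moreover have "X (x - x0) = 0"
  proof -
    have "op_abs X (x - x0) = ?R g (?R (1 - g) (x - x0))"
      using op_pow_add[OF R \<open>0 \<le> g\<close> \<open>0 \<le> 1 - g\<close>] by (simp add: op_pow_1 positive_op_bounded[OF R])
    then show ?thesis using kernel bounded_op_map_zero[OF Rg] norm_op_abs[OF X, of "x - x0"] by simp
  qed
  ultimately have "X x = X x0" "?R g x = ?R g x0"
    by (simp_all add: bounded_op_map_diff[OF X] bounded_op_map_diff[OF Rg])
  then show ?thesis using mixed_Schwarz_closure_range[OF X \<open>0 \<le> g\<close> \<open>g \<le> 1\<close> x0] by simp
qed

lemma mixed_Schwarz_quadratic:
  fixes X :: "'a::chilbert \<Rightarrow> 'a"
  assumes X: "bounded_op X" and "0 \<le> g" "g \<le> 1"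
  shows "cmod (cinner (X x) y) \<le> sqrt (Re (cinner (op_pow (op_abs X) (2 * g) x) x))
    * sqrt (Re (cinner (op_pow (op_abs (adj X)) (2 * (1 - g)) y) y))"
proof -
  have "0 \<le> 1 - g" using \<open>g \<le> 1\<close> by simp
  have "norm (op_pow (op_abs X) g x) = sqrt (Re (cinner (op_pow (op_abs X) (2 * g) x) x))"
    using norm_op_pow_square[OF positive_op_op_abs[OF X] \<open>0 \<le> g\<close>, of x]
    by (metis norm_ge_zero real_sqrt_unique)
  moreover have "norm (op_pow (op_abs (adj X)) (1 - g) y)
      = sqrt (Re (cinner (op_pow (op_abs (adj X)) (2 * (1 - g)) y) y))"
    using norm_op_pow_square[OF positive_op_op_abs[OF bounded_op_adj[OF X]] \<open>0 \<le> 1 - g\<close>, of y]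
    by (metis norm_ge_zero real_sqrt_unique)
  ultimately show ?thesis using mixed_Schwarz[OF assms, of x y] by simp
qed

lemma sqrt_mult_add_sqrt_mult_le:
  fixes a b c d :: real
  assumes "0 \<le> a" "0 \<le> b" "0 \<le> c" "0 \<le> d"
  shows "sqrt a * sqrt b + sqrt c * sqrt d \<le> sqrt (a + d) * sqrt (b + c)"
proof (rule power2_le_imp_le)
  have "0 \<le> (sqrt a * sqrt c - sqrt d * sqrt b)\<^sup>2" by simp
  then show "(sqrt a * sqrt b + sqrt c * sqrt d)\<^sup>2 \<le> (sqrt (a + d) * sqrt (b + c))\<^sup>2"
    using assms by (simp add: power2_eq_square algebra_simps real_sqrt_mult[symmetric])
qed (use assms in simp)

lemma op_matrix_antidiag_apply: "op_matrix (\<lambda>x. 0) X Y (\<lambda>x. 0) (x1, x2) = (X x2, Y x1)"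
  by (simp add: op_matrix_def)

lemma cinner_op_matrix_antidiag_self:
  "cinner (op_matrix (\<lambda>x. 0) X Y (\<lambda>x. 0) (x1, x2)) (x1, x2) = cinner (X x2) x1 + cinner (Y x1) x2"
  by (simp add: op_matrix_antidiag_apply cinner_prod_def)

lemma norm_op_matrix_antidiag_le:
  fixes X Y :: "'a::chilbert \<Rightarrow> 'a"
  assumes X: "bounded_op X" and Y: "bounded_op Y"
  shows "norm (op_matrix (\<lambda>x. 0) X Y (\<lambda>x. 0) u) \<le> max (onorm X) (onorm Y) * norm u"
proof -
  obtain x1 x2 where u: "u = (x1, x2)" by (cases u)
  define M where "M = max (onorm X) (onorm Y)"
  have "0 \<le> M" using onorm_bounded_op_nonneg[OF X] by (simp add: M_def)
  have "norm (X x2) \<le> M * norm x2" "norm (Y x1) \<le> M * norm x1"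
    using norm_bounded_op_le[OF X, of x2] norm_bounded_op_le[OF Y, of x1]
      mult_right_mono[of "onorm X" M "norm x2"] mult_right_mono[of "onorm Y" M "norm x1"]
    by (simp_all add: M_def)
  then have "(norm (X x2))\<^sup>2 + (norm (Y x1))\<^sup>2 \<le> (M * norm x2)\<^sup>2 + (M * norm x1)\<^sup>2"
    by (intro add_mono power_mono) simp_all
  then have "(norm (op_matrix (\<lambda>x. 0) X Y (\<lambda>x. 0) u))\<^sup>2 \<le> (M * norm u)\<^sup>2"
    by (simp add: u op_matrix_antidiag_apply norm_Pair power_mult_distrib algebra_simps)
  then show ?thesis unfolding M_def[symmetric] by (rule power2_le_imp_le) (simp add: \<open>0 \<le> M\<close>)
qed

lemma cinner_op_matrix_antidiag_self_le:
  fixes X Y :: "'a::chilbert \<Rightarrow> 'a"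
  assumes X: "bounded_op X" and Y: "bounded_op Y" and "0 \<le> g" "g \<le> 1"
  shows "cmod (cinner (op_matrix (\<lambda>x. 0) X Y (\<lambda>x. 0) (x1, x2)) (x1, x2))
    \<le> sqrt (onorm (\<lambda>x. op_pow (op_abs X) (2 * g) x + op_pow (op_abs (adj Y)) (2 * (1 - g)) x))
      * sqrt (onorm (\<lambda>x. op_pow (op_abs (adj X)) (2 * (1 - g)) x + op_pow (op_abs Y) (2 * g) x))
      * (norm x1 * norm x2)"
proof -
  let ?RX = "op_pow (op_abs X) (2 * g)" and ?SX = "op_pow (op_abs (adj X)) (2 * (1 - g))"
  let ?RY = "op_pow (op_abs Y) (2 * g)" and ?SY = "op_pow (op_abs (adj Y)) (2 * (1 - g))"
  define A1 where "A1 = (\<lambda>x. ?RX x + ?SY x)"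
  define A2 where "A2 = (\<lambda>x. ?SX x + ?RY x)"
  have "0 \<le> 2 * g" "0 \<le> 2 * (1 - g)" using \<open>0 \<le> g\<close> \<open>g \<le> 1\<close> by simp_all
  then have pos: "positive_op ?RX" "positive_op ?SX" "positive_op ?RY" "positive_op ?SY"
    by (simp_all add: positive_op_op_pow positive_op_op_abs bounded_op_adj X Y)
  define a b c d where "a = Re (cinner (?RX x2) x2)" and "b = Re (cinner (?SX x1) x1)"
    and "c = Re (cinner (?RY x1) x1)" and "d = Re (cinner (?SY x2) x2)"
  have abcd: "0 \<le> a" "0 \<le> b" "0 \<le> c" "0 \<le> d"
    unfolding a_def b_def c_def d_def using pos by (simp_all add: positive_op_nonneg)
  have A: "bounded_op A1" "bounded_op A2"
    unfolding A1_def A2_def using pos by (simp_all add: bounded_op_plus positive_op_bounded)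
  have "a + d \<le> onorm A1 * (norm x2)\<^sup>2" "b + c \<le> onorm A2 * (norm x1)\<^sup>2"
    using Re_cinner_le_onorm[OF A(1), of x2] Re_cinner_le_onorm[OF A(2), of x1]
    by (simp_all add: A1_def A2_def a_def b_def c_def d_def cinner_add_left)
  note le = this
  have "cmod (cinner (op_matrix (\<lambda>x. 0) X Y (\<lambda>x. 0) (x1, x2)) (x1, x2))
      \<le> sqrt a * sqrt b + sqrt c * sqrt d"
    using norm_triangle_ineq[of "cinner (X x2) x1" "cinner (Y x1) x2"]
      mixed_Schwarz_quadratic[OF X \<open>0 \<le> g\<close> \<open>g \<le> 1\<close>, of x2 x1]
      mixed_Schwarz_quadratic[OF Y \<open>0 \<le> g\<close> \<open>g \<le> 1\<close>, of x1 x2]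
    by (simp add: cinner_op_matrix_antidiag_self a_def b_def c_def d_def mult.commute)
  also have "\<dots> \<le> sqrt (a + d) * sqrt (b + c)" by (rule sqrt_mult_add_sqrt_mult_le[OF abcd])
  also have "\<dots> \<le> sqrt (onorm A1 * (norm x2)\<^sup>2) * sqrt (onorm A2 * (norm x1)\<^sup>2)"
    using le abcd by (intro mult_mono real_sqrt_le_mono) simp_all
  finally have "cmod (cinner (op_matrix (\<lambda>x. 0) X Y (\<lambda>x. 0) (x1, x2)) (x1, x2))
      \<le> sqrt (onorm A1 * (norm x2)\<^sup>2) * sqrt (onorm A2 * (norm x1)\<^sup>2)" .
  then show ?thesis by (simp add: A1_def A2_def real_sqrt_mult mult_ac)
qed

section \<open>The \<open>q\<close>-numerical radius\<close>

definition q_values :: "complex \<Rightarrow> ('a::chilbert \<Rightarrow> 'a) \<Rightarrow> real set" where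
  "q_values q T = {cmod (cinner (T x) y) | x y. norm x = 1 \<and> norm y = 1 \<and> cinner x y = q}"

lemma q_numrad_eq_Sup: "q_numrad q T = Sup (q_values q T)"
  by (simp add: q_numrad_def q_values_def)

lemma bdd_above_q_values:
  assumes "\<And>x. norm (T x) \<le> K * norm x"
  shows "bdd_above (q_values q T)"
proof (rule bdd_aboveI)
  fix w assume "w \<in> q_values q T"
  then obtain x y where "norm x = 1" "norm y = 1" "w = cmod (cinner (T x) y)"
    unfolding q_values_def by blast
  then show "w \<le> K" using cinner_Cauchy_Schwarz[of "T x" y] assms[of x] by simp
qed

lemma cmod_cinner_le_q_numrad:
  assumes "bdd_above (q_values q T)" "norm x = 1" "norm y = 1" "cinner x y = q"
  shows "cmod (cinner (T x) y) \<le> q_numrad q T"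
  unfolding q_numrad_eq_Sup using assms by (intro cSup_upper) (auto simp: q_values_def)

lemma q_numrad_nonneg:
  assumes "q_values q T \<noteq> {}" "bdd_above (q_values q T)"
  shows "0 \<le> q_numrad q T"
proof -
  obtain w where "w \<in> q_values q T" using assms(1) by blast
  moreover from this have "0 \<le> w" by (auto simp: q_values_def)
  ultimately show ?thesis unfolding q_numrad_eq_Sup by (meson cSup_upper assms(2) order_trans)
qed

lemma q_numrad_le:
  assumes "q_values q T \<noteq> {}"
    and "\<And>x y. norm x = 1 \<Longrightarrow> norm y = 1 \<Longrightarrow> cinner x y = q \<Longrightarrow> cmod (cinner (T x) y) \<le> c"
  shows "q_numrad q T \<le> c"
  unfolding q_numrad_eq_Sup using assms by (intro cSup_least) (auto simp: q_values_def)

lemma unit_vector_with_cinner: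
  assumes "norm u = 1" "norm z = 1" "cinner u z = 0" and r: "r\<^sup>2 = 1 - (cmod q)\<^sup>2"
  shows "norm (scaleC (cnj q) u + r *\<^sub>R z) = 1" and "cinner u (scaleC (cnj q) u + r *\<^sub>R z) = q"
proof -
  have "(norm (scaleC (cnj q) u + r *\<^sub>R z))\<^sup>2 = 1"
    using assms by (simp add: norm_add_square norm_scaleC cinner_scaleC_left cinner_scaleR_right)
  then show "norm (scaleC (cnj q) u + r *\<^sub>R z) = 1" by (simp only: norm_square_eq_1_iff)
  show "cinner u (scaleC (cnj q) u + r *\<^sub>R z) = q"
    using assms by (simp add: cinner_add_right cinner_scaleC_right cinner_scaleR_right cinner_self)
qed

lemma cinner_le_of_unit_cinner:
  assumes "norm u = 1" "norm v = 1" "cinner u v = q"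
  shows "cmod (cinner a v) \<le> cmod q * cmod (cinner a u) + sqrt (1 - (cmod q)\<^sup>2) * norm a"
proof -
  define w where "w = v - scaleC (cnj q) u"
  have "cinner u w = 0" using assms by (simp add: w_def cinner_diff_right cinner_scaleC_right cinner_self)
  then have "1 = (cmod q)\<^sup>2 + (norm w)\<^sup>2"
    using assms norm_add_square[of "scaleC (cnj q) u" w]
    by (simp add: w_def norm_scaleC cinner_scaleC_left)
  then have "norm w = sqrt (1 - (cmod q)\<^sup>2)" by (metis add_diff_cancel_left' norm_ge_zero real_sqrt_unique)
  moreover have "cinner a v = q * cinner a u + cinner a w"
    by (simp add: w_def cinner_diff_right cinner_scaleC_right)
  ultimately show ?thesis
    using norm_triangle_ineq[of "q * cinner a u" "cinner a w"] cinner_Cauchy_Schwarz[of a w]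
    by (simp add: norm_mult mult.commute)
qed

lemma cinner_self_le_q_numrad:
  assumes "bdd_above (q_values q T)" "cmod q \<le> 1"
    and "norm u = 1" "norm z = 1" "cinner u z = 0"
  shows "cmod q * cmod (cinner (T u) u) \<le> q_numrad q T"
proof -
  define r where "r = sqrt (1 - (cmod q)\<^sup>2)"
  have r2: "r\<^sup>2 = 1 - (cmod q)\<^sup>2" "(- r)\<^sup>2 = 1 - (cmod q)\<^sup>2"
    using power_le_one[OF norm_ge_zero \<open>cmod q \<le> 1\<close>, of 2] by (simp_all add: r_def)
  \<comment> \<open>average over the two unit vectors \<open>q\<^sup>* u \<plusminus> r z\<close>\<close>
  define A B where "A = q * cinner (T u) u" and "B = r * cinner (T u) z"
  have "cmod (A + B) \<le> q_numrad q T" "cmod (A - B) \<le> q_numrad q T"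
    using cmod_cinner_le_q_numrad[OF assms(1) assms(3) unit_vector_with_cinner[OF assms(3-5) r2(1)]]
      cmod_cinner_le_q_numrad[OF assms(1) assms(3) unit_vector_with_cinner[OF assms(3-5) r2(2)]]
    by (simp_all add: A_def B_def cinner_add_right cinner_diff_right cinner_scaleC_right cinner_scaleR_right)
  then have "2 * cmod A \<le> 2 * q_numrad q T"
    using norm_triangle_ineq[of "A + B" "A - B"] by simp
  then show ?thesis by (simp add: A_def norm_mult)
qed

lemma q_values_op_matrix_nonempty:
  assumes "\<exists>x::'a::chilbert. x \<noteq> 0" "cmod q \<le> 1"
  shows "q_values q (T :: 'a \<times> 'a \<Rightarrow> 'a \<times> 'a) \<noteq> {}"
proof -
  obtain e :: 'a where "e \<noteq> 0" using assms(1) by blast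
  define u where "u = (1 / norm e) *\<^sub>R e"
  have "norm u = 1" using \<open>e \<noteq> 0\<close> by (simp add: u_def)
  then have u0: "norm (u, 0) = 1" and "norm (0, u) = 1" "cinner (u, 0) (0, u) = 0"
    by (simp_all add: norm_Pair cinner_prod_def)
  moreover have "(sqrt (1 - (cmod q)\<^sup>2))\<^sup>2 = 1 - (cmod q)\<^sup>2"
    using power_le_one[OF norm_ge_zero assms(2), of 2] by simp
  ultimately have "norm (scaleC (cnj q) (u, 0) + sqrt (1 - (cmod q)\<^sup>2) *\<^sub>R (0, u)) = 1"
    "cinner (u, 0) (scaleC (cnj q) (u, 0) + sqrt (1 - (cmod q)\<^sup>2) *\<^sub>R (0, u)) = q"
    by (rule unit_vector_with_cinner)+
  with u0 show ?thesis unfolding q_values_def by blast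
qed

lemma Re_cinner_rotated_sum:
  assumes Y: "bounded_op Y"
  shows "Re (cinner (scaleC e (X b) + scaleC (cnj e) (adj Y b)) a) = Re (e * (cinner (X b) a + cinner (Y a) b))"
proof -
  have "cinner (adj Y b) a = cnj (cinner (Y a) b)"
    unfolding adj_cinner_left[OF Y] by (rule cinner_commute)
  then have "Re (cnj e * cinner (adj Y b) a) = Re (e * cinner (Y a) b)"
    by (simp only: complex_cnj_mult[symmetric] cnj.sel)
  then show ?thesis by (simp add: cinner_add_left cinner_scaleC_left distrib_left)
qed

lemma rotated_sum_le_q_numrad:
  fixes X Y :: "'a::chilbert \<Rightarrow> 'a"
  assumes X: "bounded_op X" and Y: "bounded_op Y" and "cmod q \<le> 1"
    and "norm a = 1" "norm b = 1" "cmod e = 1"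
  shows "cmod q * Re (cinner (scaleC e (X b) + scaleC (cnj e) (adj Y b)) a)
    \<le> 2 * q_numrad q (op_matrix (\<lambda>x. 0) X Y (\<lambda>x. 0))"
proof -
  let ?T = "op_matrix (\<lambda>x. 0) X Y (\<lambda>x. 0)"
  define h :: real where "h = 1 / sqrt 2"
  define u z where "u = (h *\<^sub>R a, h *\<^sub>R b)" and "z = (h *\<^sub>R a, - h *\<^sub>R b)"
  have "norm u = 1" "norm z = 1"
    using \<open>norm a = 1\<close> \<open>norm b = 1\<close> by (simp_all add: u_def z_def norm_Pair h_def power_divide)
  have "cinner u z = 0"
    using \<open>norm a = 1\<close> \<open>norm b = 1\<close>
    by (simp add: u_def z_def cinner_prod_def cinner_scaleR_left cinner_scaleR_right cinner_minus_right
        cinner_self)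
  have "cinner (?T u) u = complex_of_real h * complex_of_real h * (cinner (X b) a + cinner (Y a) b)"
    by (simp add: u_def cinner_op_matrix_antidiag_self bounded_op_map_scaleR X Y cinner_scaleR_left
        cinner_scaleR_right algebra_simps)
  moreover have "complex_of_real h * complex_of_real h = 1/2" by (simp add: h_def flip: of_real_mult)
  ultimately have "2 * cinner (?T u) u = cinner (X b) a + cinner (Y a) b" by (simp add: mult.commute)
  then have "Re (cinner (scaleC e (X b) + scaleC (cnj e) (adj Y b)) a) = Re (e * (2 * cinner (?T u) u))"
    by (simp add: Re_cinner_rotated_sum[OF Y])
  also have "\<dots> \<le> 2 * cmod (cinner (?T u) u)"
    using complex_Re_le_cmod[of "e * (2 * cinner (?T u) u)"] \<open>cmod e = 1\<close> by (simp add: norm_mult)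
  finally have "cmod q * Re (cinner (scaleC e (X b) + scaleC (cnj e) (adj Y b)) a)
      \<le> 2 * (cmod q * cmod (cinner (?T u) u))"
    using mult_left_mono[OF _ norm_ge_zero[of q]] by (simp add: mult.left_commute)
  also have "\<dots> \<le> 2 * q_numrad q ?T"
    using cinner_self_le_q_numrad[OF bdd_above_q_values[OF norm_op_matrix_antidiag_le[OF X Y]]
        \<open>cmod q \<le> 1\<close> \<open>norm u = 1\<close> \<open>norm z = 1\<close> \<open>cinner u z = 0\<close>]
    by simp
  finally show ?thesis .
qed

lemma onorm_rotated_sum_le_q_numrad:
  fixes X Y :: "'a::chilbert \<Rightarrow> 'a" and \<theta> :: real
  assumes X: "bounded_op X" and Y: "bounded_op Y" and "q \<noteq> 0" "cmod q \<le> 1"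
    and "0 \<le> q_numrad q (op_matrix (\<lambda>x. 0) X Y (\<lambda>x. 0))"
  shows "onorm (\<lambda>x. scaleC (exp (\<i> * \<theta>)) (X x) + scaleC (exp (- \<i> * \<theta>)) (adj Y x))
    \<le> 2 * q_numrad q (op_matrix (\<lambda>x. 0) X Y (\<lambda>x. 0)) / cmod q"
proof -
  let ?w = "q_numrad q (op_matrix (\<lambda>x. 0) X Y (\<lambda>x. 0))"
  define e where "e = exp (\<i> * complex_of_real \<theta>)"
  have "cmod e = 1" by (simp add: e_def)
  have "exp (- \<i> * complex_of_real \<theta>) = cnj e" by (simp add: e_def exp_cnj)
  then have Z: "(\<lambda>x. scaleC (exp (\<i> * \<theta>)) (X x) + scaleC (exp (- \<i> * \<theta>)) (adj Y x))
      = (\<lambda>x. scaleC e (X x) + scaleC (cnj e) (adj Y x))" (is "_ = ?Z")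
    by (simp add: e_def)
  have "onorm ?Z \<le> 2 * ?w / cmod q"
  proof (rule onorm_le_on_unit_sphere)
    show "bounded_op ?Z"
      by (intro bounded_op_plus bounded_op_scaleC X bounded_op_adj Y)
    show "0 \<le> 2 * ?w / cmod q" using \<open>0 \<le> ?w\<close> by simp
    fix b :: 'a assume "norm b = 1"
    show "norm (?Z b) \<le> 2 * ?w / cmod q"
    proof (cases "?Z b = 0")
      case False
      define a where "a = (1 / norm (?Z b)) *\<^sub>R ?Z b"
      have "norm a = 1" using False by (simp add: a_def)
      have "Re (cinner (?Z b) a) = norm (?Z b)"
        using False by (simp add: a_def cinner_scaleR_right cinner_self power2_eq_square)
      then have "cmod q * norm (?Z b) \<le> 2 * ?w"
        using rotated_sum_le_q_numrad[OF X Y \<open>cmod q \<le> 1\<close> \<open>norm a = 1\<close> \<open>norm b = 1\<close> \<open>cmod e = 1\<close>]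
        by simp
      then show ?thesis using \<open>q \<noteq> 0\<close> by (simp add: field_simps)
    qed (use \<open>0 \<le> ?w\<close> in simp)
  qed
  then show ?thesis unfolding Z .
qed

lemma cinner_op_matrix_antidiag_le:
  fixes X Y :: "'a::chilbert \<Rightarrow> 'a"
  assumes X: "bounded_op X" and Y: "bounded_op Y" and "0 \<le> g" "g \<le> 1"
    and "norm u = 1" "norm v = 1" "cinner u v = q"
  shows "cmod (cinner (op_matrix (\<lambda>x. 0) X Y (\<lambda>x. 0) u) v)
    \<le> cmod q / 2
        * sqrt (onorm (\<lambda>x. op_pow (op_abs X) (2 * g) x + op_pow (op_abs (adj Y)) (2 * (1 - g)) x))
        * sqrt (onorm (\<lambda>x. op_pow (op_abs (adj X)) (2 * (1 - g)) x + op_pow (op_abs Y) (2 * g) x))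
      + sqrt (1 - (cmod q)\<^sup>2) * max (onorm X) (onorm Y)"
proof -
  let ?T = "op_matrix (\<lambda>x. 0) X Y (\<lambda>x. 0)"
  define K where "K = sqrt (onorm (\<lambda>x. op_pow (op_abs X) (2 * g) x + op_pow (op_abs (adj Y)) (2 * (1 - g)) x))
    * sqrt (onorm (\<lambda>x. op_pow (op_abs (adj X)) (2 * (1 - g)) x + op_pow (op_abs Y) (2 * g) x))"
  obtain x1 x2 where u: "u = (x1, x2)" by (cases u)
  have "0 \<le> K" unfolding K_def
    by (intro mult_nonneg_nonneg real_sqrt_ge_zero onorm_bounded_op_nonneg bounded_op_plus
        bounded_op_op_pow positive_op_op_abs bounded_op_adj X Y) (use \<open>0 \<le> g\<close> \<open>g \<le> 1\<close> in simp_all)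
  have "2 * (norm x1 * norm x2) \<le> (norm x1)\<^sup>2 + (norm x2)\<^sup>2"
    using sum_squares_bound[of "norm x1" "norm x2"] by simp
  also have "\<dots> = 1" using \<open>norm u = 1\<close> by (simp add: u norm_Pair)
  finally have "K * (norm x1 * norm x2) \<le> K / 2"
    using mult_left_mono[OF _ \<open>0 \<le> K\<close>, of "norm x1 * norm x2" "1/2"] by simp
  then have "cmod (cinner (?T u) u) \<le> K / 2"
    using cinner_op_matrix_antidiag_self_le[OF X Y \<open>0 \<le> g\<close> \<open>g \<le> 1\<close>, of x1 x2] by (simp add: u K_def)
  moreover have "norm (?T u) \<le> max (onorm X) (onorm Y)"
    using norm_op_matrix_antidiag_le[OF X Y, of u] \<open>norm u = 1\<close> by simp
  moreover have "(cmod q)\<^sup>2 \<le> 1"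
    using cinner_Cauchy_Schwarz[of u v] assms(5-7) by (simp add: power_le_one)
  ultimately have "cmod q * cmod (cinner (?T u) u) + sqrt (1 - (cmod q)\<^sup>2) * norm (?T u)
      \<le> cmod q * (K / 2) + sqrt (1 - (cmod q)\<^sup>2) * max (onorm X) (onorm Y)"
    by (intro add_mono mult_left_mono) simp_all
  then show ?thesis
    using cinner_le_of_unit_cinner[OF \<open>norm u = 1\<close> \<open>norm v = 1\<close> \<open>cinner u v = q\<close>, of "?T u"]
    by (simp add: K_def mult_ac)
qed

theorem theorem3p11:
  fixes X Y :: "'a::chilbert \<Rightarrow> 'a" and q :: complex and \<gamma> :: real
  assumes "\<exists>x::'a. x \<noteq> 0"
    and "bounded_op X" and "bounded_op Y"
    and "q \<noteq> 0" and "cmod q \<le> 1"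
    and "0 \<le> \<gamma>" and "\<gamma> \<le> 1"
  shows "cmod q / 2 * (SUP \<theta>::real. onorm (\<lambda>x. scaleC (exp (\<i> * \<theta>)) (X x) + scaleC (exp (- \<i> * \<theta>)) (adj Y x)))
           \<le> q_numrad q (op_matrix (\<lambda>x. 0) X Y (\<lambda>x. 0))
         \<and> q_numrad q (op_matrix (\<lambda>x. 0) X Y (\<lambda>x. 0))
           \<le> cmod q / 2
               * sqrt (onorm (\<lambda>x. op_pow (op_abs X) (2 * \<gamma>) x + op_pow (op_abs (adj Y)) (2 * (1 - \<gamma>)) x))
               * sqrt (onorm (\<lambda>x. op_pow (op_abs (adj X)) (2 * (1 - \<gamma>)) x + op_pow (op_abs Y) (2 * \<gamma>) x))
             + sqrt (1 - (cmod q)\<^sup>2) * max (onorm X) (onorm Y)"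
proof
  let ?T = "op_matrix (\<lambda>x. 0) X Y (\<lambda>x. 0)"
  have nonempty: "q_values q ?T \<noteq> {}" by (rule q_values_op_matrix_nonempty[OF assms(1,5)])
  have bdd: "bdd_above (q_values q ?T)"
    by (rule bdd_above_q_values[OF norm_op_matrix_antidiag_le[OF assms(2,3)]])
  have "(SUP \<theta>::real. onorm (\<lambda>x. scaleC (exp (\<i> * \<theta>)) (X x) + scaleC (exp (- \<i> * \<theta>)) (adj Y x)))
      \<le> 2 * q_numrad q ?T / cmod q"
    by (rule cSUP_least) (simp, rule onorm_rotated_sum_le_q_numrad[OF assms(2-5) q_numrad_nonneg[OF nonempty bdd]])
  then show "cmod q / 2 * (SUP \<theta>::real. onorm (\<lambda>x. scaleC (exp (\<i> * \<theta>)) (X x) + scaleC (exp (- \<i> * \<theta>)) (adj Y x)))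
      \<le> q_numrad q ?T"
    using \<open>q \<noteq> 0\<close> by (simp add: field_simps)
  show "q_numrad q ?T \<le> cmod q / 2
      * sqrt (onorm (\<lambda>x. op_pow (op_abs X) (2 * \<gamma>) x + op_pow (op_abs (adj Y)) (2 * (1 - \<gamma>)) x))
      * sqrt (onorm (\<lambda>x. op_pow (op_abs (adj X)) (2 * (1 - \<gamma>)) x + op_pow (op_abs Y) (2 * \<gamma>) x))
      + sqrt (1 - (cmod q)\<^sup>2) * max (onorm X) (onorm Y)"
    by (rule q_numrad_le[OF nonempty cinner_op_matrix_antidiag_le[OF assms(2,3,6,7)]])
qed

end
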